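(* Let $\mathbf H\subset GL_m(\mathbb C)$ be a finite unitary group with generating set $X_{\mathbf H}$ and $\mathbf G=\mathbf H\wr\mathrm{Sym}_n$, with the subgroup sequence, coset leaders, initial vector and generating sets $X_k$ of $\mathbf G_k$ described in the context. Assume the Nearest Neighbors Property holds for $X_{2n-1}$. Let $g\in\mathbf G$. If a received vector lies in the decoding region containing a nearest neighbor of $g^{-1}\mathbf x_0$, then the subgroup decoding algorithm decodes it to a group element whose canonical form as a product of coset leaders differs from that of $g$ in only one factor.
   Context: $\mathbf G$ is the group of $mn\times mn$ block permutation matrices with nonzero blocks in $\mathbf H$. Subgroups: $\mathbf G_0=\{I\}$, $\mathbf G_{2l-1}=(\mathbf H\wr\mathrm{Sym}_l)\oplus\{I_{m(n-l)}\}$ ($1\le l\le n$), $\mathbf G_{2l}=(\mathbf H\wr\mathrm{Sym}_l)\oplus\mathbf H\oplus\{I_{m(n-l-1)}\}$ ($1\le l\le n-1$). Coset leaders: $\operatorname{CL}(\mathbf G_1/\mathbf G_0)=\mathbf G_1$; $\operatorname{CL}(\mathbf G_{2l}/\mathbf G_{2l-1})=\{(1,\dots,1,h,1,\dots,1):h\in\mathbf H\text{ in slot }l+1\}$; $\operatorname{CL}(\mathbf G_{2l+1}/\mathbf G_{2l})=\{(j\ j{+}1\ \cdots\ l{+}1):1\le j\le l+1\}$; every $g$ is uniquely $c_{2n-1}\cdots c_1$ with $c_k\in\operatorname{CL}(\mathbf G_k/\mathbf G_{k-1})$ (canonical form). Initial vector $\mathbf x_0=(u_1\mathbf v_0,\dots,u_n\mathbf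 v_0)$, $\mathbf v_0\in\mathbb C^m$ a unit vector such that the identity is the unique $h\in\mathbf H$ minimizing $\|h\mathbf v_0-\mathbf v_0\|$, reals $0<u_1<\cdots<u_n$, $\|\mathbf x_0\|=1$. Generators: $X_{2l-1}=\{(h,1,\dots,1):h\in X_{\mathbf H}\}\cup\{(1\,2),\dots,(l{-}1\ l)\}$, $X_{2l}=X_{2l-1}\cup\{(1,\dots,1,h,1,\dots,1):h\in\mathbf H\text{ in slot }l+1\}$. $S=\operatorname{Stab}_{\mathbf G}(\mathbf x_0)$; $d_{min}=\min_{a\notin S}\|a\mathbf x_0-\mathbf x_0\|$; nearest neighbors of a codeword $\mathbf u\in\mathbf G\mathbf x_0$ are codewords $\mathbf v$ with $\|\mathbf u-\mathbf v\|=d_{min}$; $N_{\mathbf G}=\{a\in\mathbf G:a\mathbf x_0\text{ is a nearest neighbor of }\mathbf x_0\}$; Nearest Neighbors Property for $X$: $N_{\mathbf G}\subseteq X\cup X^{-1}$. Decoding region $\operatorname{DR}(h)=\{\mathbf x:\|h\mathbf x-\mathbf x_0\|<\|a\mathbf x-\mathbf x_0\|\ \forall a\notin Sh\}$, which contains $h^{-1}\mathbf x_0$. Subgroup decoding algorithm: $\mathbf r_0=\mathbf r$; for $k=1,\dots,2n-1$ choose $d_k\in\operatorname{CL}(\mathbf G_k/\mathbf G_{k-1})$ minimizing $\|a\mathbf r_{k-1}-\mathbf x_0\|$ (ties broken by a fixed ordering), $\mathbf r_k=d_k\mathbf r_{k-1}$; output $d_{2n-1}\cdots d_1$. *)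

theory Defs
  imports "HOL-Combinatorics.Permutations" "Jordan_Normal_Form.Matrix"
begin

definition vnorm :: "complex vec \<Rightarrow> real" where
  "vnorm x = sqrt (\<Sum>i<dim_vec x. (cmod (x $ i))^2)"

definition cadj :: "complex mat \<Rightarrow> complex mat" where
  "cadj A = mat (dim_col A) (dim_row A) (\<lambda>(i,j). cnj (A $$ (j,i)))"

definition unitary_mat :: "nat \<Rightarrow> complex mat \<Rightarrow> bool" where
  "unitary_mat m A \<longleftrightarrow> A \<in> carrier_mat m m \<and> A * cadj A = 1\<^sub>m m \<and> cadj A * A = 1\<^sub>m m"

definition finite_unitary_group :: "nat \<Rightarrow> complex mat set \<Rightarrow> bool" where
  "finite_unitary_group m H \<longleftrightarrow> finite H \<and> (\<forall>h\<in>H. unitary_mat m h) \<and> 1\<^sub>m m \<in> H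
     \<and> (\<forall>a\<in>H. \<forall>b\<in>H. a * b \<in> H) \<and> (\<forall>a\<in>H. \<exists>b\<in>H. a * b = 1\<^sub>m m)"

inductive_set gen_grp :: "nat \<Rightarrow> complex mat set \<Rightarrow> complex mat set" for m X where
  one: "1\<^sub>m m \<in> gen_grp m X"
| gen: "x \<in> X \<Longrightarrow> y \<in> gen_grp m X \<Longrightarrow> x * y \<in> gen_grp m X"
| inv: "x \<in> X \<Longrightarrow> z \<in> carrier_mat m m \<Longrightarrow> x * z = 1\<^sub>m m \<Longrightarrow> y \<in> gen_grp m X
          \<Longrightarrow> z * y \<in> gen_grp m X"

definition generates :: "nat \<Rightarrow> complex mat set \<Rightarrow> complex mat set \<Rightarrow> bool" where
  "generates m X H \<longleftrightarrow> X \<subseteq> H \<and> gen_grp m X = H"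

text \<open>Blocks are indexed 0..n-1 (block i of the paper is block i-1 here).
  The block monomial matrix with diagonal part hs and permutation s has block hs i
  in block position (i, inv s i), i.e. block (s j, j) equals hs (s j); all other blocks vanish.
  Thus wr hs id is the block diagonal (hs 0, ..., hs (n-1)) and wr (\<lambda>_. 1) s is the
  block permutation matrix sending block j to block s j.\<close>
definition wr :: "nat \<Rightarrow> nat \<Rightarrow> (nat \<Rightarrow> complex mat) \<Rightarrow> (nat \<Rightarrow> nat) \<Rightarrow> complex mat" where
  "wr m n hs s = mat (m*n) (m*n)
     (\<lambda>(r,c). if r div m = s (c div m) then hs (r div m) $$ (r mod m, c mod m) else 0)"

definition wr_sub :: "nat \<Rightarrow> nat \<Rightarrow> complex mat set \<Rightarrow> nat \<Rightarrow> nat \<Rightarrow> complex mat set" where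
  "wr_sub m n H p q = {wr m n hs s | hs s. s permutes {..<p} \<and> (\<forall>i<q. hs i \<in> H)
                         \<and> (\<forall>i. q \<le> i \<longrightarrow> hs i = 1\<^sub>m m)}"

definition GG :: "nat \<Rightarrow> nat \<Rightarrow> complex mat set \<Rightarrow> complex mat set" where
  "GG m n H = wr_sub m n H n n"

text \<open>Subgroup chain G_0 < G_1 < ... < G_{2n-1} = G.
  G_{2l-1} = (H wr Sym_l) + I,  G_{2l} = (H wr Sym_l) + H + I.\<close>
definition Gk :: "nat \<Rightarrow> nat \<Rightarrow> complex mat set \<Rightarrow> nat \<Rightarrow> complex mat set" where
  "Gk m n H k = (if k = 0 then {1\<^sub>m (m*n)}
                 else if odd k then wr_sub m n H ((k+1) div 2) ((k+1) div 2)
                 else wr_sub m n H (k div 2) (k div 2 + 1))"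

definition cyc :: "nat \<Rightarrow> nat \<Rightarrow> nat \<Rightarrow> nat" where
  "cyc a b i = (if a \<le> i \<and> i < b then i + 1 else if i = b then a else i)"

definition adjswap :: "nat \<Rightarrow> nat \<Rightarrow> nat" where
  "adjswap i k = (if k = i then i + 1 else if k = i + 1 then i else k)"

text \<open>Coset leaders CL(G_k / G_{k-1}), k = 1..2n-1.
  CL_1 = G_1; CL_{2l} = {(1,..,1,h,1,..,1) : h in H, h in slot l+1};
  CL_{2l+1} = {(j j+1 ... l+1) : 1 <= j <= l+1}  (1-indexed; here 0-indexed).\<close>
definition CL :: "nat \<Rightarrow> nat \<Rightarrow> complex mat set \<Rightarrow> nat \<Rightarrow> complex mat set" where
  "CL m n H k = (if k = 1 then Gk m n H 1
                 else if even k then {wr m n (\<lambda>i. if i = k div 2 then h else 1\<^sub>m m) id | h. h \<in> H}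
                 else {wr m n (\<lambda>_. 1\<^sub>m m) (cyc j (k div 2)) | j. j \<le> k div 2})"

definition Xodd :: "nat \<Rightarrow> nat \<Rightarrow> complex mat set \<Rightarrow> nat \<Rightarrow> complex mat set" where
  "Xodd m n XH l = {wr m n (\<lambda>i. if i = 0 then h else 1\<^sub>m m) id | h. h \<in> XH}
                 \<union> {wr m n (\<lambda>_. 1\<^sub>m m) (adjswap i) | i. i + 1 < l}"

definition Xk :: "nat \<Rightarrow> nat \<Rightarrow> complex mat set \<Rightarrow> complex mat set \<Rightarrow> nat \<Rightarrow> complex mat set" where
  "Xk m n H XH k = (if odd k then Xodd m n XH ((k+1) div 2)
                    else Xodd m n XH (k div 2)
                         \<union> {wr m n (\<lambda>i. if i = k div 2 then h else 1\<^sub>m m) id | h. h \<in> H})"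

definition Stab :: "complex mat set \<Rightarrow> complex vec \<Rightarrow> complex mat set" where
  "Stab G x0 = {a \<in> G. a *\<^sub>v x0 = x0}"

definition dmin :: "complex mat set \<Rightarrow> complex vec \<Rightarrow> real" where
  "dmin G x0 = Min {vnorm (a *\<^sub>v x0 - x0) | a. a \<in> G - Stab G x0}"

text \<open>v is a nearest neighbour of the codeword u (only meaningful when G x0 has more than one
  point, i.e. G - Stab is nonempty, which is where d_min is defined).\<close>
definition nearest_neighbor :: "complex mat set \<Rightarrow> complex vec \<Rightarrow> complex vec \<Rightarrow> complex vec \<Rightarrow> bool" where
  "nearest_neighbor G x0 u v \<longleftrightarrow> G - Stab G x0 \<noteq> {} \<and> u \<in> (\<lambda>a. a *\<^sub>v x0) ` G
      \<and> v \<in> (\<lambda>a. a *\<^sub>v x0) ` G \<and> vnorm (u - v) = dmin G x0"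

definition NG :: "complex mat set \<Rightarrow> complex vec \<Rightarrow> complex mat set" where
  "NG G x0 = {a \<in> G. nearest_neighbor G x0 x0 (a *\<^sub>v x0)}"

definition inv_set :: "nat \<Rightarrow> complex mat set \<Rightarrow> complex mat set \<Rightarrow> complex mat set" where
  "inv_set N G X = {a \<in> G. \<exists>x\<in>X. a * x = 1\<^sub>m N}"

definition NN_property :: "nat \<Rightarrow> complex mat set \<Rightarrow> complex vec \<Rightarrow> complex mat set \<Rightarrow> bool" where
  "NN_property N G x0 X \<longleftrightarrow> NG G x0 \<subseteq> X \<union> inv_set N G X"

definition DR :: "nat \<Rightarrow> complex mat set \<Rightarrow> complex vec \<Rightarrow> complex mat \<Rightarrow> complex vec set" where
  "DR N G x0 h = {x \<in> carrier_vec N. \<forall>a \<in> G - {s * h | s. s \<in> Stab G x0}.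
                    vnorm (h *\<^sub>v x - x0) < vnorm (a *\<^sub>v x - x0)}"

fun lprod :: "nat \<Rightarrow> (nat \<Rightarrow> complex mat) \<Rightarrow> nat \<Rightarrow> complex mat" where
  "lprod N c 0 = 1\<^sub>m N"
| "lprod N c (Suc k) = c (Suc k) * lprod N c k"

text \<open>d is a run of the subgroup decoding algorithm on the received vector r:
  r_0 = r, d_k in CL_k minimises |a r_{k-1} - x0| over a in CL_k, r_k = d_k r_{k-1}.
  Any choice among minimisers is allowed (this covers every fixed tie-breaking order).
  The output is lprod (m*n) d (2n-1).\<close>
definition decoding_run :: "nat \<Rightarrow> nat \<Rightarrow> complex mat set \<Rightarrow> complex vec \<Rightarrow> complex vec
                              \<Rightarrow> (nat \<Rightarrow> complex mat) \<Rightarrow> bool" where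
  "decoding_run m n H x0 r d \<longleftrightarrow>
     (\<forall>k \<in> {1..2*n-1}. d k \<in> CL m n H k \<and>
        (\<forall>a \<in> CL m n H k. vnorm (d k *\<^sub>v (lprod (m*n) d (k-1) *\<^sub>v r) - x0)
                            \<le> vnorm (a *\<^sub>v (lprod (m*n) d (k-1) *\<^sub>v r) - x0)))"

definition init_vec :: "nat \<Rightarrow> nat \<Rightarrow> (nat \<Rightarrow> real) \<Rightarrow> complex vec \<Rightarrow> complex vec" where
  "init_vec m n u v0 = vec (m*n) (\<lambda>r. complex_of_real (u (r div m)) * v0 $ (r mod m))"

end

theory Submission
  imports Defs "Jordan_Normal_Form.Determinant"
begin

text \<open>
  The subgroup decoder started in the decoding region of h returns exactly h. After step k the
  first k div 2 + 1 blocks of the current vector are each best aligned with v0 within their H-orbit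
  and the first (k+1) div 2 of them are sorted by alignment; at the end, the rearrangement
  inequality makes the current vector nearest to x0 in its whole G-orbit.

  The quotient e = g h^-1 maps x0 to a nearest neighbour of x0, so by the Nearest Neighbours
  Property e is an elementary generator: a nontrivial element of one block or an adjacent
  transposition. Pushed through a product of coset leaders, such a generator either passes a leader
  (becoming an elementary generator of a smaller G_k) or is absorbed by it into a different leader.
  Hence e h has a canonical form differing from that of h in exactly one leader, and canonical forms
  are unique.
\<close>

text \<open>The bare name inv denotes the group inverse of the algebra locales loaded with
  Jordan_Normal_Form, hence the explicit Hilbert_Choice.inv.\<close>

abbreviation pinv :: "(nat \<Rightarrow> nat) \<Rightarrow> nat \<Rightarrow> nat" where
  "pinv \<equiv> Hilbert_Choice.inv"

section \<open>Block monomial matrices and the Euclidean norm\<close>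

lemma block_index_less:
  fixes q t :: nat
  assumes "q < n" "t < m"
  shows "q*m + t < m*n"
proof -
  have "q*m + t < (q+1)*m" using assms(2) by simp
  also have "\<dots> \<le> n*m" using assms(1) by (intro mult_right_mono) auto
  finally show ?thesis by (simp add: mult.commute)
qed

lemma sum_lessThan_mult_blocks:
  "(\<Sum>k<(m::nat)*n. f k) = (\<Sum>q<n. \<Sum>t<m. f (q*m+t))"
proof -
  have shift: "sum f {a..<a+k} = (\<Sum>t<k. f (a+t))" for a k by (induct k) auto
  have "(\<Sum>k<m*n. f k) = (\<Sum>q<n. sum f {q*m..<q*m+m})"
    using sum.nat_group[where g=f and k=m and n=n] by (simp add: mult.commute)
  then show ?thesis by (simp add: shift)
qed

definition block_vec :: "nat \<Rightarrow> 'a vec \<Rightarrow> nat \<Rightarrow> 'a vec" where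
  "block_vec m x q = vec m (\<lambda>t. x $ (q*m+t))"

lemma block_vec_carrier [simp]:
  "block_vec m x q \<in> carrier_vec m" "dim_vec (block_vec m x q) = m"
  unfolding block_vec_def by auto

lemma block_vec_index [simp]: "t < m \<Longrightarrow> block_vec m x q $ t = x $ (q*m+t)"
  unfolding block_vec_def by auto

lemma block_vec_minus:
  fixes x y :: "'a :: group_add vec"
  shows "x \<in> carrier_vec (m*n) \<Longrightarrow> y \<in> carrier_vec (m*n) \<Longrightarrow> q < n \<Longrightarrow>
    block_vec m (x - y) q = block_vec m x q - block_vec m y q"
  by (rule eq_vecI) (auto simp: block_index_less)

lemma wr_index:
  "r < m*n \<Longrightarrow> c < m*n \<Longrightarrow> wr m n hs s $$ (r,c) =
     (if r div m = s (c div m) then hs (r div m) $$ (r mod m, c mod m) else 0)"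
  unfolding wr_def by simp

lemma wr_carrier [simp]: "wr m n hs s \<in> carrier_mat (m*n) (m*n)"
  unfolding wr_def by simp

lemma wr_mult_vec_carrier [simp]: "y \<in> carrier_vec (m*n) \<Longrightarrow> wr m n hs s *\<^sub>v y \<in> carrier_vec (m*n)"
  by (rule mult_mat_vec_carrier[OF wr_carrier])

lemma wr_dim [simp]: "dim_row (wr m n hs s) = m*n" "dim_col (wr m n hs s) = m*n"
  unfolding wr_def by simp_all

lemma wr_row_sum:
  assumes s: "s permutes {..<n}" and r: "r < m*n"
  shows "(\<Sum>k<m*n. wr m n hs s $$ (r,k) * f k)
       = (\<Sum>t<m. hs (r div m) $$ (r mod m, t) * f (pinv s (r div m) * m + t))"
proof -
  define q0 where "q0 = pinv s (r div m)"
  have "r div m < n" using r by (simp add: less_mult_imp_div_less mult.commute)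
  then have q0: "q0 < n" unfolding q0_def using permutes_in_image[OF permutes_inv[OF s]] by auto
  have hit: "r div m = s q \<longleftrightarrow> q = q0" for q
    unfolding q0_def using permutes_inv_eq[OF s] by metis
  have "(\<Sum>k<m*n. wr m n hs s $$ (r,k) * f k)
      = (\<Sum>q<n. \<Sum>t<m. wr m n hs s $$ (r, q*m+t) * f (q*m+t))"
    by (rule sum_lessThan_mult_blocks)
  also have "\<dots> = (\<Sum>q<n. if q = q0 then \<Sum>t<m. hs (r div m) $$ (r mod m, t) * f (q*m+t) else 0)"
    using r block_index_less[of _ n _ m] by (intro sum.cong refl) (auto simp: wr_index hit)
  also have "\<dots> = (\<Sum>t<m. hs (r div m) $$ (r mod m, t) * f (q0 * m + t))"
    using q0 by simp
  finally show ?thesis unfolding q0_def .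
qed

lemma wr_mult:
  assumes s1: "s1 permutes {..<n}" and s2: "s2 permutes {..<n}"
    and h1: "\<And>i. hs1 i \<in> carrier_mat m m" and h2: "\<And>i. hs2 i \<in> carrier_mat m m"
  shows "wr m n hs1 s1 * wr m n hs2 s2 = wr m n (\<lambda>i. hs1 i * hs2 (pinv s1 i)) (s1 \<circ> s2)"
proof (rule eq_matI)
  fix r c assume "r < dim_row (wr m n (\<lambda>i. hs1 i * hs2 (pinv s1 i)) (s1 \<circ> s2))"
    and "c < dim_col (wr m n (\<lambda>i. hs1 i * hs2 (pinv s1 i)) (s1 \<circ> s2))"
  then have r: "r < m*n" and c: "c < m*n" by auto
  then have m: "0 < m" by (cases m) auto
  define q0 where "q0 = pinv s1 (r div m)"
  have hit: "q0 = s2 (c div m) \<longleftrightarrow> r div m = s1 (s2 (c div m))"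
    unfolding q0_def using permutes_inv_eq[OF s1] by metis
  have "(wr m n hs1 s1 * wr m n hs2 s2) $$ (r,c)
      = (\<Sum>k<m*n. wr m n hs1 s1 $$ (r,k) * wr m n hs2 s2 $$ (k,c))"
    using r c by (simp add: scalar_prod_def row_def col_def lessThan_atLeast0)
  also have "\<dots> = (\<Sum>t<m. hs1 (r div m) $$ (r mod m, t) * wr m n hs2 s2 $$ (q0*m+t, c))"
    unfolding q0_def by (rule wr_row_sum[OF s1 r])
  also have "\<dots> = (if q0 = s2 (c div m)
      then (\<Sum>t<m. hs1 (r div m) $$ (r mod m, t) * hs2 q0 $$ (t, c mod m)) else 0)"
  proof -
    have "r div m < n" using r by (simp add: less_mult_imp_div_less mult.commute)
    then have "q0 < n" unfolding q0_def using permutes_in_image[OF permutes_inv[OF s1]] by auto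
    then show ?thesis using c block_index_less[of q0 n _ m] by (auto simp: wr_index intro!: sum.cong)
  qed
  also have "\<dots> = wr m n (\<lambda>i. hs1 i * hs2 (pinv s1 i)) (s1 \<circ> s2) $$ (r,c)"
  proof (cases "q0 = s2 (c div m)")
    case True
    have "r mod m < m" "c mod m < m" "pinv s1 (r div m) = q0" using m unfolding q0_def by auto
    then show ?thesis using True r c h1[of "r div m"] h2[of q0] hit
      by (simp add: wr_index scalar_prod_def row_def col_def lessThan_atLeast0 permutes_inverses[OF s1])
  qed (use r c hit in \<open>simp add: wr_index\<close>)
  finally show "(wr m n hs1 s1 * wr m n hs2 s2) $$ (r,c)
      = wr m n (\<lambda>i. hs1 i * hs2 (pinv s1 i)) (s1 \<circ> s2) $$ (r,c)" .
qed auto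

lemma block_vec_wr_mult_vec:
  assumes s: "s permutes {..<n}" and h: "\<And>i. hs i \<in> carrier_mat m m"
    and x: "x \<in> carrier_vec (m*n)" and q: "q < n"
  shows "block_vec m (wr m n hs s *\<^sub>v x) q = hs q *\<^sub>v block_vec m x (pinv s q)"
proof (rule eq_vecI)
  fix t assume "t < dim_vec (hs q *\<^sub>v block_vec m x (pinv s q))"
  then have t: "t < m" using h[of q] by auto
  have r: "q*m + t < m*n" by (rule block_index_less[OF q t])
  have "block_vec m (wr m n hs s *\<^sub>v x) q $ t = (\<Sum>k<m*n. wr m n hs s $$ (q*m+t,k) * x $ k)"
    using t r x by (simp add: scalar_prod_def row_def lessThan_atLeast0)
  also have "\<dots> = (\<Sum>t'<m. hs q $$ (t,t') * x $ (pinv s q * m + t'))"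
    using wr_row_sum[OF s r] t by simp
  also have "\<dots> = (hs q *\<^sub>v block_vec m x (pinv s q)) $ t"
    using t h[of q] by (simp add: scalar_prod_def row_def lessThan_atLeast0)
  finally show "block_vec m (wr m n hs s *\<^sub>v x) q $ t = (hs q *\<^sub>v block_vec m x (pinv s q)) $ t" .
qed (use h[of q] in auto)

lemma wr_one: "wr m n (\<lambda>_. 1\<^sub>m m) id = 1\<^sub>m (m*n)"
proof (rule eq_matI)
  fix r c assume "r < dim_row (1\<^sub>m (m*n))" "c < dim_col (1\<^sub>m (m*n))"
  then have r: "r < m*n" and c: "c < m*n" by auto
  then have "0 < m" by (cases m) auto
  moreover have "r = c \<longleftrightarrow> r div m = c div m \<and> r mod m = c mod m" by (metis div_mult_mod_eq)
  ultimately show "wr m n (\<lambda>_. 1\<^sub>m m) id $$ (r,c) = 1\<^sub>m (m*n) $$ (r,c)"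
    using r c by (simp add: wr_index)
qed auto

lemma wr_perm_mult:
  assumes "s1 permutes {..<n}" "s2 permutes {..<n}"
  shows "wr m n (\<lambda>_. 1\<^sub>m m) s1 * wr m n (\<lambda>_. 1\<^sub>m m) s2 = wr m n (\<lambda>_. 1\<^sub>m m) (s1 \<circ> s2)"
  using wr_mult[OF assms, of "\<lambda>_. 1\<^sub>m m" m "\<lambda>_. 1\<^sub>m m"] by simp

lemma vnorm_nonneg: "0 \<le> vnorm x"
  unfolding vnorm_def by (simp add: sum_nonneg)

lemma vnorm_zero_vec [simp]: "vnorm (0\<^sub>v N) = 0"
  unfolding vnorm_def by (simp add: sum.neutral)

lemma vnorm_power2: "vnorm x ^ 2 = (\<Sum>i<dim_vec x. (cmod (x $ i))^2)"
  unfolding vnorm_def by (simp add: sum_nonneg)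

lemma vnorm_eq_iff_power2: "vnorm x = vnorm y \<longleftrightarrow> vnorm x ^ 2 = vnorm y ^ 2"
  using vnorm_nonneg[of x] vnorm_nonneg[of y] by (metis power2_eq_iff_nonneg)

lemma vnorm_le_iff_power2: "vnorm x \<le> vnorm y \<longleftrightarrow> vnorm x ^ 2 \<le> vnorm y ^ 2"
  using vnorm_nonneg[of x] vnorm_nonneg[of y] by (metis power2_le_imp_le power_mono)

lemma vnorm_power2_blocks:
  "x \<in> carrier_vec (m*n) \<Longrightarrow> vnorm x ^ 2 = (\<Sum>q<n. vnorm (block_vec m x q) ^ 2)"
  unfolding vnorm_power2 by (simp add: sum_lessThan_mult_blocks[of _ m n] block_index_less)

lemma vnorm_smult: "vnorm (a \<cdot>\<^sub>v v) = cmod a * vnorm v"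
proof -
  have "vnorm (a \<cdot>\<^sub>v v) ^ 2 = (cmod a * vnorm v) ^ 2"
    by (simp add: vnorm_power2 power_mult_distrib norm_mult sum_distrib_left)
  then show ?thesis using vnorm_nonneg[of v] vnorm_nonneg[of "a \<cdot>\<^sub>v v"]
    by (metis norm_ge_zero power2_eq_iff_nonneg zero_le_mult_iff)
qed

lemma vnorm_eq_0_imp_eq:
  assumes "x \<in> carrier_vec N" "y \<in> carrier_vec N" "vnorm (x - y) = 0"
  shows "x = y"
proof (rule eq_vecI)
  have "(\<Sum>i<N. (cmod ((x - y) $ i))^2) = 0" using vnorm_power2[of "x - y"] assms by simp
  then have "\<forall>i\<in>{..<N}. (cmod ((x - y) $ i))^2 = 0" by (subst sum_nonneg_eq_0_iff[symmetric]) auto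
  then show "\<And>i. i < dim_vec y \<Longrightarrow> x $ i = y $ i" using assms by auto
qed (use assms in auto)

lemma of_real_vnorm_power2: "complex_of_real (vnorm x ^ 2) = (\<Sum>i<dim_vec x. x $ i * cnj (x $ i))"
  unfolding vnorm_power2 of_real_sum by (intro sum.cong refl) (rule complex_norm_square)

lemma unitary_column_orthonormal:
  assumes "unitary_mat m b" "k < m" "j < m"
  shows "(\<Sum>i<m. cnj (b $$ (i,k)) * b $$ (i,j)) = (if k = j then 1 else 0)"
proof -
  have b: "b \<in> carrier_mat m m" and "cadj b * b = 1\<^sub>m m" using assms(1) unfolding unitary_mat_def by auto
  moreover have "(cadj b * b) $$ (k,j) = (\<Sum>i<m. cnj (b $$ (i,k)) * b $$ (i,j))"
    using b assms by (simp add: cadj_def scalar_prod_def row_def col_def lessThan_atLeast0)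
  ultimately show ?thesis using assms by simp
qed

lemma unitary_vnorm:
  assumes u: "unitary_mat m b" and w: "w \<in> carrier_vec m"
  shows "vnorm (b *\<^sub>v w) = vnorm w"
proof -
  have b: "b \<in> carrier_mat m m" using u unfolding unitary_mat_def by auto
  have bw: "i < m \<Longrightarrow> (b *\<^sub>v w) $ i = (\<Sum>j<m. b $$ (i,j) * w $ j)" for i
    using b w by (simp add: scalar_prod_def row_def lessThan_atLeast0)
  have "complex_of_real (vnorm (b *\<^sub>v w) ^ 2) = (\<Sum>i<m. (b *\<^sub>v w) $ i * cnj ((b *\<^sub>v w) $ i))"
    by (subst of_real_vnorm_power2) (use b in simp)
  also have "\<dots> = (\<Sum>i<m. (\<Sum>j<m. b $$ (i,j) * w $ j) * cnj (\<Sum>k<m. b $$ (i,k) * w $ k))"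
    by (simp add: bw)
  also have "\<dots> = (\<Sum>i<m. \<Sum>j<m. \<Sum>k<m. w $ j * cnj (w $ k) * (cnj (b $$ (i,k)) * b $$ (i,j)))"
    unfolding cnj_sum sum_product by (intro sum.cong refl) (simp add: mult_ac)
  also have "\<dots> = (\<Sum>j<m. \<Sum>k<m. \<Sum>i<m. w $ j * cnj (w $ k) * (cnj (b $$ (i,k)) * b $$ (i,j)))"
    by (subst sum.swap) (intro sum.cong refl sum.swap)
  also have "\<dots> = (\<Sum>j<m. \<Sum>k<m. w $ j * cnj (w $ k) * (if k = j then 1 else 0))"
    by (intro sum.cong refl) (simp add: sum_distrib_left[symmetric] unitary_column_orthonormal[OF u])
  also have "\<dots> = complex_of_real (vnorm w ^ 2)"
    by (subst of_real_vnorm_power2) (use w in \<open>simp add: if_distrib cong: if_cong\<close>)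
  finally show ?thesis unfolding vnorm_eq_iff_power2 using of_real_eq_iff by blast
qed

definition re_inner :: "complex vec \<Rightarrow> complex vec \<Rightarrow> real" where
  "re_inner w v = Re (\<Sum>t<dim_vec v. w $ t * cnj (v $ t))"

lemma vnorm_diff_smult_power2:
  assumes w: "w \<in> carrier_vec m" and v: "v \<in> carrier_vec m" "vnorm v = 1"
  shows "vnorm (w - complex_of_real t \<cdot>\<^sub>v v) ^ 2 = vnorm w ^ 2 - 2 * t * re_inner w v + t^2"
proof -
  have cmod_diff: "(cmod (a - complex_of_real t * b))^2
      = (cmod a)^2 - 2*t*Re (a * cnj b) + t^2 * (cmod b)^2" for a b
    unfolding cmod_power2 by (simp add: power2_eq_square algebra_simps)
  have "(\<Sum>i<m. (cmod (v $ i))^2) = 1" using v vnorm_power2[of v] by simp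
  moreover have "(\<Sum>i<m. (cmod (w $ i))^2) = vnorm w ^ 2" using w vnorm_power2[of w] by simp
  ultimately show ?thesis
    using w v unfolding re_inner_def Re_sum
    by (simp add: vnorm_power2 cmod_diff sum.distrib sum_subtractf sum_distrib_left[symmetric])
qed

section \<open>Rearrangement inequality and cycles\<close>

lemma rearrangement_inequality:
  fixes a b :: "nat \<Rightarrow> real"
  assumes "\<And>i j. i \<le> j \<Longrightarrow> j < N \<Longrightarrow> a i \<le> a j" "\<And>i j. i \<le> j \<Longrightarrow> j < N \<Longrightarrow> b i \<le> b j"
    and "s permutes {..<N}"
  shows "(\<Sum>q<N. a (s q) * b q) \<le> (\<Sum>q<N. a q * b q)"
  using assms
proof (induction N arbitrary: s)
  case 0
  then show ?case by simp
next
  case (Suc N)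
  note s = Suc.prems(3)
  text \<open>Exchange the preimage p of N with N itself; the exchange does not decrease the sum.\<close>
  define p where "p = pinv s N"
  define s' where "s' = Transposition.transpose N (s N) \<circ> s"
  have s': "s' permutes {..<N}"
    unfolding s'_def by (rule permutes_insert_lemma) (use s in \<open>simp add: lessThan_Suc\<close>)
  have IH: "(\<Sum>q<N. a (s' q) * b q) \<le> (\<Sum>q<N. a q * b q)"
    by (rule Suc.IH[OF _ _ s']) (use Suc.prems in auto)
  have sp: "s p = N" unfolding p_def using permutes_inverses[OF s] by simp
  have pN: "p \<le> N" using permutes_in_image[OF s, of p] sp by auto
  have aN: "a (s N) \<le> a N" using Suc.prems(1) permutes_in_image[OF s, of N] by auto
  show ?case
  proof (cases "p = N")
    case True
    then have "s' = s" using sp unfolding s'_def by auto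
    then show ?thesis using IH True sp by simp
  next
    case False
    have s'q: "s' q = (if q = p then s N else s q)" if "q \<noteq> N" for q
    proof (cases "q = p")
      case False
      then have "s q \<noteq> N" "s q \<noteq> s N" using that sp permutes_inj[OF s] by (auto dest: injD)
      then show ?thesis using False unfolding s'_def by simp
    qed (use sp in \<open>simp add: s'_def\<close>)
    have "(\<Sum>q<N. a (s q) * b q)
        = (\<Sum>q<N. a (s' q) * b q + (if q = p then (a N - a (s N)) * b p else 0))"
      using s'q sp by (intro sum.cong refl) (auto simp: algebra_simps)
    also have "\<dots> = (\<Sum>q<N. a (s' q) * b q) + (a N - a (s N)) * b p"
      using False pN by (simp add: sum.distrib)
    also have "\<dots> \<le> (\<Sum>q<N. a q * b q) + (a N - a (s N)) * b N"
      using IH aN Suc.prems(2)[of p N] pN by (intro add_mono mult_left_mono) auto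
    finally show ?thesis by (simp add: algebra_simps)
  qed
qed

definition cycinv :: "nat \<Rightarrow> nat \<Rightarrow> nat \<Rightarrow> nat" where
  "cycinv a b i = (if a < i \<and> i \<le> b then i - 1 else if i = a then b else i)"

lemma cyc_cycinv: "a \<le> b \<Longrightarrow> cyc a b (cycinv a b i) = i" "a \<le> b \<Longrightarrow> cycinv a b (cyc a b i) = i"
  unfolding cyc_def cycinv_def by auto

lemma inv_cyc: "a \<le> b \<Longrightarrow> pinv (cyc a b) = cycinv a b"
  by (rule inv_equality) (auto simp: cyc_cycinv)

lemma cyc_permutes:
  assumes "a \<le> b" "b < n"
  shows "cyc a b permutes {..<n}"
proof -
  have "bij (cyc a b)" using cyc_cycinv[OF assms(1)] by (metis bij_betw_byWitness subset_UNIV)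
  moreover have "\<forall>x. x \<notin> {..<n} \<longrightarrow> cyc a b x = x" using assms unfolding cyc_def by auto
  ultimately show ?thesis unfolding permutes_def bij_iff by auto
qed

lemma cyc_last: "a \<le> b \<Longrightarrow> cyc a b b = a"
  unfolding cyc_def by auto

lemma cycinv_le: "a \<le> b \<Longrightarrow> i \<le> b \<Longrightarrow> cycinv a b i \<le> b"
  unfolding cycinv_def by auto

lemma sum_cycinv_shift:
  fixes f g :: "nat \<Rightarrow> real"
  assumes "j < l" "l < n"
  shows "(\<Sum>q<n. f q * g (cycinv (j+1) l q))
       = (\<Sum>q<n. f q * g (cycinv j l q)) + (f (j+1) - f j) * (g l - g j)"
proof -
  have "(\<Sum>q<n. f q * g (cycinv (j+1) l q)) = (\<Sum>q<n. f q * g (cycinv j l q)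
      + ((if q = j then f j * (g j - g l) else 0) + (if q = j+1 then f (j+1) * (g l - g j) else 0)))"
    using assms by (intro sum.cong refl) (auto simp: cycinv_def algebra_simps)
  also have "\<dots> = (\<Sum>q<n. f q * g (cycinv j l q)) + (f j * (g j - g l) + f (j+1) * (g l - g j))"
    using assms by (simp add: sum.distrib)
  finally show ?thesis by (simp add: algebra_simps)
qed

lemma adjswap_adjswap [simp]: "adjswap i (adjswap i k) = k"
  unfolding adjswap_def by auto

lemma inv_adjswap: "pinv (adjswap i) = adjswap i"
  by (rule inv_equality) auto

lemma adjswap_permutes:
  assumes "i + 1 < n"
  shows "adjswap i permutes {..<n}"
proof -
  have "bij (adjswap i)" by (metis adjswap_adjswap bij_betw_byWitness subset_UNIV)
  moreover have "\<forall>x. x \<notin> {..<n} \<longrightarrow> adjswap i x = x" using assms unfolding adjswap_def by auto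
  ultimately show ?thesis unfolding permutes_def bij_iff by auto
qed

lemma adjswap_cyc_disjoint: "i + 1 < j \<Longrightarrow> j \<le> l \<Longrightarrow> adjswap i \<circ> cyc j l = cyc j l \<circ> adjswap i"
  by (auto simp: fun_eq_iff adjswap_def cyc_def)

lemma adjswap_cyc_inside: "j < i \<Longrightarrow> i + 1 \<le> l \<Longrightarrow> adjswap i \<circ> cyc j l = cyc j l \<circ> adjswap (i - 1)"
  by (auto simp: fun_eq_iff adjswap_def cyc_def)

lemma adjswap_cyc_start: "i + 1 \<le> l \<Longrightarrow> adjswap i \<circ> cyc i l = cyc (i+1) l"
  by (auto simp: fun_eq_iff adjswap_def cyc_def)

lemma adjswap_cyc_start_Suc: "i + 1 \<le> l \<Longrightarrow> adjswap i \<circ> cyc (i+1) l = cyc i l"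
  by (auto simp: fun_eq_iff adjswap_def cyc_def)

section \<open>The wreath product as a matrix group\<close>

definition single_block :: "nat \<Rightarrow> nat \<Rightarrow> complex mat \<Rightarrow> nat \<Rightarrow> complex mat" where
  "single_block m p b = (\<lambda>i. if i = p then b else 1\<^sub>m m)"

lemma single_block_one [simp]: "single_block m p (1\<^sub>m m) = (\<lambda>_. 1\<^sub>m m)"
  unfolding single_block_def by auto

locale wreath_product =
  fixes m n :: nat and H :: "complex mat set"
  assumes H: "finite_unitary_group m H" and m_pos: "0 < m" and n_pos: "0 < n"
begin

lemma H_unitary: "b \<in> H \<Longrightarrow> unitary_mat m b"
  using H unfolding finite_unitary_group_def by auto

lemma H_carrier: "b \<in> H \<Longrightarrow> b \<in> carrier_mat m m"
  using H_unitary unfolding unitary_mat_def by auto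

lemma H_one: "1\<^sub>m m \<in> H"
  using H unfolding finite_unitary_group_def by auto

lemma H_mult: "a \<in> H \<Longrightarrow> b \<in> H \<Longrightarrow> a * b \<in> H"
  using H unfolding finite_unitary_group_def by auto

lemma H_right_inverse: "a \<in> H \<Longrightarrow> \<exists>b\<in>H. a * b = 1\<^sub>m m"
  using H unfolding finite_unitary_group_def by auto

lemma H_left_inverse: "a \<in> H \<Longrightarrow> \<exists>b\<in>H. b * a = 1\<^sub>m m"
  using H_right_inverse mat_mult_left_right_inverse[OF H_carrier H_carrier] by blast

lemma H_right_cancel:
  assumes b: "b \<in> H" and c: "c \<in> H" and bc: "b * c = c"
  shows "b = 1\<^sub>m m"
proof -
  obtain c' where c': "c' \<in> H" "c * c' = 1\<^sub>m m" using H_right_inverse[OF c] by blast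
  have "b = (b * c) * c'" using c' H_carrier[OF b] H_carrier[OF c] H_carrier[OF c'(1)] by simp
  then show ?thesis using bc c' by simp
qed

lemma H_nonzero_entry:
  assumes b: "b \<in> H"
  obtains t t' where "t < m" "t' < m" "b $$ (t,t') \<noteq> 0"
proof (rule ccontr)
  assume "\<not> thesis"
  then have z: "\<And>t t'. t < m \<Longrightarrow> t' < m \<Longrightarrow> b $$ (t,t') = 0" using that by blast
  obtain c where c: "c \<in> H" "c * b = 1\<^sub>m m" using H_left_inverse[OF b] by auto
  have "(c * b) $$ (0,0) = 0"
    using z m_pos H_carrier[OF b] H_carrier[OF c(1)] by (simp add: scalar_prod_def col_def)
  then show False using c m_pos by simp
qed

text \<open>Coordinates (hs, s) of the element wr m n hs s of GG m n H; fixing hs i = 1 outside the n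
  blocks makes them unique.\<close>

definition wr_coords :: "(nat \<Rightarrow> complex mat) \<Rightarrow> (nat \<Rightarrow> nat) \<Rightarrow> bool" where
  "wr_coords hs s \<longleftrightarrow> s permutes {..<n} \<and> (\<forall>i<n. hs i \<in> H) \<and> (\<forall>i. n \<le> i \<longrightarrow> hs i = 1\<^sub>m m)"

lemma GG_eq: "GG m n H = {wr m n hs s |hs s. wr_coords hs s}"
  unfolding GG_def wr_sub_def wr_coords_def by auto

lemma wr_in_GG: "wr_coords hs s \<Longrightarrow> wr m n hs s \<in> GG m n H"
  unfolding GG_eq by blast

lemma GG_carrier: "a \<in> GG m n H \<Longrightarrow> a \<in> carrier_mat (m*n) (m*n)"
  unfolding GG_eq by auto

lemma wr_coords_carrier: "wr_coords hs s \<Longrightarrow> hs i \<in> carrier_mat m m"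
  unfolding wr_coords_def using H_carrier H_one by (cases "i < n") auto

lemma wr_coords_pinv_less: "wr_coords hs s \<Longrightarrow> q < n \<Longrightarrow> pinv s q < n"
  unfolding wr_coords_def using permutes_in_image[OF permutes_inv, of s "{..<n}" q] by auto

lemma wr_coords_one: "wr_coords (\<lambda>_. 1\<^sub>m m) id"
  unfolding wr_coords_def using H_one by (auto simp: permutes_id)

lemma wr_coords_single_block: "p < n \<Longrightarrow> b \<in> H \<Longrightarrow> wr_coords (single_block m p b) id"
  unfolding wr_coords_def single_block_def using H_one by (auto simp: permutes_id)

lemma wr_coords_cyc: "j \<le> l \<Longrightarrow> l < n \<Longrightarrow> wr_coords (\<lambda>_. 1\<^sub>m m) (cyc j l)"
  unfolding wr_coords_def using H_one cyc_permutes by auto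

lemma wr_coords_adjswap: "i + 1 < n \<Longrightarrow> wr_coords (\<lambda>_. 1\<^sub>m m) (adjswap i)"
  unfolding wr_coords_def using H_one adjswap_permutes by auto

lemma wr_coords_mult:
  assumes "wr_coords hs1 s1" "wr_coords hs2 s2"
  shows "wr_coords (\<lambda>i. hs1 i * hs2 (pinv s1 i)) (s1 \<circ> s2)"
proof -
  have s1: "s1 permutes {..<n}" and s2: "s2 permutes {..<n}"
    using assms unfolding wr_coords_def by auto
  have "hs1 i * hs2 (pinv s1 i) \<in> H" if "i < n" for i
    using that assms H_mult wr_coords_pinv_less[OF assms(1)] unfolding wr_coords_def by auto
  moreover have "hs1 i * hs2 (pinv s1 i) = 1\<^sub>m m" if "n \<le> i" for i
    using that assms permutes_not_in[OF permutes_inv[OF s1], of i] unfolding wr_coords_def by auto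
  ultimately show ?thesis unfolding wr_coords_def using permutes_compose[OF s2 s1] by auto
qed

lemma wr_mult_coords:
  assumes "wr_coords hs1 s1" "wr_coords hs2 s2"
  shows "wr m n hs1 s1 * wr m n hs2 s2 = wr m n (\<lambda>i. hs1 i * hs2 (pinv s1 i)) (s1 \<circ> s2)"
  using assms by (intro wr_mult wr_coords_carrier) (auto simp: wr_coords_def)

lemma GG_one: "1\<^sub>m (m*n) \<in> GG m n H"
  using wr_in_GG[OF wr_coords_one] by (simp add: wr_one)

lemma GG_mult:
  assumes "a \<in> GG m n H" "b \<in> GG m n H"
  shows "a * b \<in> GG m n H"
proof -
  obtain hs1 s1 hs2 s2 where "wr_coords hs1 s1" "wr_coords hs2 s2" "a = wr m n hs1 s1" "b = wr m n hs2 s2"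
    using assms unfolding GG_eq by auto
  then show ?thesis using wr_mult_coords wr_coords_mult wr_in_GG by simp
qed

lemma wr_coords_left_inverse:
  assumes g: "wr_coords hs s"
  obtains hs' where "wr_coords hs' (pinv s)" "wr m n hs' (pinv s) * wr m n hs s = 1\<^sub>m (m*n)"
proof -
  have s: "s permutes {..<n}" using g unfolding wr_coords_def by auto
  have "\<forall>i<n. \<exists>b\<in>H. b * hs (s i) = 1\<^sub>m m"
    using g permutes_in_image[OF s] H_left_inverse unfolding wr_coords_def by auto
  then obtain f where f: "\<And>i. i < n \<Longrightarrow> f i \<in> H \<and> f i * hs (s i) = 1\<^sub>m m" by metis
  define hs' where "hs' i = (if i < n then f i else 1\<^sub>m m)" for i
  have coords: "wr_coords hs' (pinv s)"
    unfolding wr_coords_def hs'_def using f permutes_inv[OF s] H_one by auto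
  have "hs' i * hs (pinv (pinv s) i) = 1\<^sub>m m" for i
    using f g permutes_not_in[OF s, of i] unfolding hs'_def permutes_inv_inv[OF s] wr_coords_def
    by (cases "i < n") auto
  then have "wr m n hs' (pinv s) * wr m n hs s = 1\<^sub>m (m*n)"
    unfolding wr_mult_coords[OF coords g] permutes_inv_o(2)[OF s] by (simp add: wr_one)
  with coords that show ?thesis by blast
qed

lemma GG_inverse:
  assumes "a \<in> GG m n H"
  obtains a' where "a' \<in> GG m n H" "a' * a = 1\<^sub>m (m*n)" "a * a' = 1\<^sub>m (m*n)"
proof -
  obtain hs s where g: "wr_coords hs s" and a: "a = wr m n hs s" using assms unfolding GG_eq by auto
  obtain hs' where g': "wr_coords hs' (pinv s)" and e: "wr m n hs' (pinv s) * a = 1\<^sub>m (m*n)"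
    using wr_coords_left_inverse[OF g] a by metis
  moreover have "a * wr m n hs' (pinv s) = 1\<^sub>m (m*n)"
    using mat_mult_left_right_inverse[OF wr_carrier _ e] a by simp
  ultimately show ?thesis using that wr_in_GG by blast
qed

lemma GG_finite: "finite (GG m n H)"
proof -
  define F where "F = {hs. (\<forall>i<n. hs i \<in> H) \<and> (\<forall>i. n \<le> i \<longrightarrow> hs i = 1\<^sub>m m)}"
  have "F \<subseteq> (\<lambda>f i. if i < n then f i else 1\<^sub>m m) ` (PiE {..<n} (\<lambda>_. H))"
  proof
    fix hs assume hs: "hs \<in> F"
    then have "hs = (\<lambda>i. if i < n then restrict hs {..<n} i else 1\<^sub>m m)"
      unfolding F_def by (auto simp: fun_eq_iff)
    moreover have "restrict hs {..<n} \<in> PiE {..<n} (\<lambda>_. H)" using hs unfolding F_def by auto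
    ultimately show "hs \<in> (\<lambda>f i. if i < n then f i else 1\<^sub>m m) ` (PiE {..<n} (\<lambda>_. H))" by blast
  qed
  moreover have "finite (PiE {..<n} (\<lambda>_. H))"
    using H unfolding finite_unitary_group_def by (simp add: finite_PiE)
  then have "finite ((\<lambda>f i. if i < n then f i else 1\<^sub>m m) ` (PiE {..<n} (\<lambda>_. H)))" by simp
  ultimately have "finite F" by (rule finite_subset)
  moreover have "GG m n H = (\<lambda>(hs, s). wr m n hs s) ` (F \<times> {s. s permutes {..<n}})"
    unfolding GG_eq wr_coords_def F_def by auto
  ultimately show ?thesis by (simp add: finite_permutations)
qed

lemma wr_coords_inj:
  assumes g: "wr_coords hs s" and g': "wr_coords hs' s'" and e: "wr m n hs s = wr m n hs' s'"
  shows "hs = hs'" "s = s'"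
proof -
  have s: "s permutes {..<n}" and s': "s' permutes {..<n}" using g g' unfolding wr_coords_def by auto
  have entry: "hs (s c) $$ (t,t') = (if s c = s' c then hs' (s c) $$ (t,t') else 0)"
    if c: "c < n" and t: "t < m" "t' < m" for c t t'
  proof -
    have "s c < n" using permutes_in_image[OF s] c by auto
    then show ?thesis
      using arg_cong[OF e, of "\<lambda>A. A $$ (s c * m + t, c * m + t')"] t c
        block_index_less[of "s c" n t m] block_index_less[of c n t' m]
      by (simp add: wr_index)
  qed
  have seq: "s c = s' c" if c: "c < n" for c
  proof (rule ccontr)
    assume ne: "s c \<noteq> s' c"
    have "hs (s c) \<in> H" using g permutes_in_image[OF s] c unfolding wr_coords_def by auto
    then show False using H_nonzero_entry entry[OF c] ne by metis
  qed
  show ss: "s = s'"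
  proof (rule ext)
    fix x show "s x = s' x"
      using seq permutes_not_in[OF s, of x] permutes_not_in[OF s', of x] by (cases "x < n") auto
  qed
  show "hs = hs'"
  proof
    fix i show "hs i = hs' i"
    proof (cases "i < n")
      case True
      define c where "c = pinv s i"
      have c: "c < n" using wr_coords_pinv_less[OF g True] unfolding c_def .
      have sc: "s c = i" unfolding c_def using permutes_inverses[OF s] by simp
      show ?thesis
        using entry[OF c] sc ss wr_coords_carrier[OF g, of i] wr_coords_carrier[OF g', of i]
        by (intro eq_matI) auto
    qed (use g g' in \<open>auto simp: wr_coords_def\<close>)
  qed
qed

lemma block_vec_wr:
  "wr_coords hs s \<Longrightarrow> y \<in> carrier_vec (m*n) \<Longrightarrow> q < n \<Longrightarrow>
    block_vec m (wr m n hs s *\<^sub>v y) q = hs q *\<^sub>v block_vec m y (pinv s q)"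
  by (rule block_vec_wr_mult_vec[OF _ wr_coords_carrier]) (auto simp: wr_coords_def)

lemma GG_vnorm:
  assumes a: "a \<in> GG m n H" and z: "z \<in> carrier_vec (m*n)"
  shows "vnorm (a *\<^sub>v z) = vnorm z"
proof -
  obtain hs s where g: "wr_coords hs s" and a: "a = wr m n hs s" using a unfolding GG_eq by auto
  have s: "s permutes {..<n}" using g unfolding wr_coords_def by auto
  have "vnorm (a *\<^sub>v z) ^ 2 = (\<Sum>q<n. vnorm (block_vec m (a *\<^sub>v z) q) ^ 2)"
    using a z by (simp add: vnorm_power2_blocks)
  also have "\<dots> = (\<Sum>q<n. vnorm (block_vec m z (pinv s q)) ^ 2)"
    using g z a block_vec_wr unitary_vnorm[OF H_unitary]
    by (intro sum.cong refl) (auto simp: wr_coords_def)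
  also have "\<dots> = (\<Sum>q<n. vnorm (block_vec m z q) ^ 2)"
    using sum.permute[OF permutes_inv[OF s], of "\<lambda>q. vnorm (block_vec m z q) ^ 2"] by simp
  also have "\<dots> = vnorm z ^ 2" using vnorm_power2_blocks[OF z] by simp
  finally show ?thesis unfolding vnorm_eq_iff_power2 .
qed

lemma lprod_GG: "\<forall>k\<in>{1..K}. d k \<in> GG m n H \<Longrightarrow> lprod (m*n) d K \<in> GG m n H"
proof (induction K)
  case (Suc K)
  then show ?case using GG_mult by simp
qed (simp add: GG_one)

lemma CL_one: "CL m n H 1 = {wr m n (single_block m 0 b) id | b. b \<in> H}"
proof (intro equalityI subsetI)
  fix x assume "x \<in> CL m n H 1"
  then obtain hs s where x: "x = wr m n hs s" and s: "s permutes {..<1}" and h0: "hs 0 \<in> H"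
    and h1: "\<forall>i. 1 \<le> i \<longrightarrow> hs i = 1\<^sub>m m"
    unfolding CL_def Gk_def wr_sub_def by auto
  have "s = id" using s by (simp add: lessThan_Suc)
  moreover have "hs = single_block m 0 (hs 0)" unfolding single_block_def fun_eq_iff using h1 by simp
  ultimately have "x = wr m n (single_block m 0 (hs 0)) id" using x by simp
  then show "x \<in> {wr m n (single_block m 0 b) id | b. b \<in> H}" using h0 by blast
next
  fix x assume "x \<in> {wr m n (single_block m 0 b) id | b. b \<in> H}"
  then obtain b where "x = wr m n (single_block m 0 b) id" "b \<in> H" by blast
  then have "x \<in> wr_sub m n H 1 1"
    unfolding wr_sub_def
    by (intro CollectI exI[of _ "single_block m 0 b"] exI[of _ id]) (simp add: single_block_def)
  then show "x \<in> CL m n H 1" by (simp add: CL_def Gk_def)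
qed

lemma CL_diag:
  assumes "k = 1 \<or> even k"
  shows "CL m n H k = {wr m n (single_block m (k div 2) b) id | b. b \<in> H}"
proof (cases "k = 1")
  case True
  then show ?thesis using CL_one by simp
next
  case False
  then show ?thesis using assms unfolding CL_def single_block_def by simp
qed

lemma CL_odd:
  "odd k \<Longrightarrow> k \<noteq> 1 \<Longrightarrow> CL m n H k = {wr m n (\<lambda>_. 1\<^sub>m m) (cyc j (k div 2)) | j. j \<le> k div 2}"
  unfolding CL_def by simp

lemma CL_subset_GG:
  assumes "1 \<le> k" "k \<le> 2*n-1"
  shows "CL m n H k \<subseteq> GG m n H"
proof
  fix x assume x: "x \<in> CL m n H k"
  have kn: "k div 2 < n" using assms by auto
  show "x \<in> GG m n H"
  proof (cases "k = 1 \<or> even k")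
    case True
    then obtain b where "x = wr m n (single_block m (k div 2) b) id" "b \<in> H"
      using x CL_diag by blast
    then show ?thesis using wr_in_GG wr_coords_single_block[OF kn] by simp
  next
    case False
    then obtain j where "x = wr m n (\<lambda>_. 1\<^sub>m m) (cyc j (k div 2))" "j \<le> k div 2"
      using x CL_odd by auto
    then show ?thesis using wr_in_GG wr_coords_cyc[OF _ kn] by simp
  qed
qed

lemma lprod_CL_GG:
  assumes "K \<le> 2*n-1" "\<forall>k\<in>{1..K}. c k \<in> CL m n H k"
  shows "lprod (m*n) c K \<in> GG m n H"
proof (rule lprod_GG, rule ballI)
  fix k assume "k \<in> {1..K}"
  then show "c k \<in> GG m n H" using assms CL_subset_GG[of k] by auto
qed

end

section \<open>The subgroup decoder\<close>

locale wreath_code = wreath_product +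
  fixes v0 :: "complex vec" and u :: "nat \<Rightarrow> real"
  assumes v0: "v0 \<in> carrier_vec m" and v0_norm: "vnorm v0 = 1"
    and v0_min: "\<forall>h \<in> H - {1\<^sub>m m}. vnorm (1\<^sub>m m *\<^sub>v v0 - v0) < vnorm (h *\<^sub>v v0 - v0)"
    and u_pos: "0 < u 0"
    and u_inc: "\<forall>i. i + 1 < n \<longrightarrow> u i < u (i + 1)"
begin

abbreviation "x0 \<equiv> init_vec m n u v0"

lemma u_strict_mono: "i < j \<Longrightarrow> j < n \<Longrightarrow> u i < u j"
proof (induction j)
  case (Suc j)
  then show ?case using u_inc by (cases "i = j") (auto intro: less_trans)
qed simp

lemma u_mono: "i \<le> j \<Longrightarrow> j < n \<Longrightarrow> u i \<le> u j"
  using u_strict_mono[of i j] by (cases "i = j") auto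

lemma u_inj: "i < n \<Longrightarrow> j < n \<Longrightarrow> u i = u j \<Longrightarrow> i = j"
  using u_strict_mono by (metis less_irrefl linorder_neqE_nat)

lemma u_pos_less: "q < n \<Longrightarrow> 0 < u q"
  using u_mono[of 0 q] u_pos by auto

lemma x0_carrier: "x0 \<in> carrier_vec (m*n)"
  unfolding init_vec_def by simp

lemma block_vec_x0: "q < n \<Longrightarrow> block_vec m x0 q = complex_of_real (u q) \<cdot>\<^sub>v v0"
  by (rule eq_vecI) (use v0 in \<open>auto simp: init_vec_def block_index_less\<close>)

lemma H_fixes_v0_imp_one:
  assumes "b \<in> H" "b *\<^sub>v v0 = v0"
  shows "b = 1\<^sub>m m"
proof (rule ccontr)
  assume "b \<noteq> 1\<^sub>m m"
  then have "vnorm (1\<^sub>m m *\<^sub>v v0 - v0) < vnorm (b *\<^sub>v v0 - v0)" using v0_min assms(1) by blast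
  then show False using assms(2) v0 by simp
qed

lemma wr_fixes_x0_block:
  assumes g: "wr_coords hs s" and fixed: "wr m n hs s *\<^sub>v x0 = x0" and q: "q < n"
  shows "pinv s q = q" "hs q = 1\<^sub>m m"
proof -
  have hq: "hs q \<in> H" using g q unfolding wr_coords_def by auto
  have pq: "pinv s q < n" by (rule wr_coords_pinv_less[OF g q])
  have block: "hs q *\<^sub>v (complex_of_real (u (pinv s q)) \<cdot>\<^sub>v v0) = complex_of_real (u q) \<cdot>\<^sub>v v0"
    using arg_cong[OF fixed, of "\<lambda>y. block_vec m y q"]
    unfolding block_vec_wr[OF g x0_carrier q] block_vec_x0[OF q] block_vec_x0[OF pq] .
  text \<open>Comparing norms identifies the weights, and distinct blocks carry distinct weights.\<close>
  have "u (pinv s q) = u q"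
    using arg_cong[OF block, of vnorm] unitary_vnorm[OF H_unitary[OF hq]] v0 u_pos_less[OF pq] u_pos_less[OF q]
    by (simp add: vnorm_smult v0_norm)
  then show pinv_q: "pinv s q = q" using u_inj[OF pq q] by simp
  have "complex_of_real (u q) \<cdot>\<^sub>v (hs q *\<^sub>v v0) = complex_of_real (u q) \<cdot>\<^sub>v v0"
    using block pinv_q mult_mat_vec[OF H_carrier[OF hq] v0] by simp
  then have "hs q *\<^sub>v v0 = v0"
    using u_pos_less[OF q] smult_smult_assoc[of "inverse (complex_of_real (u q))"]
    by (metis (no_types, lifting) mult.commute of_real_eq_0_iff order_less_irrefl one_smult_vec right_inverse)
  then show "hs q = 1\<^sub>m m" by (rule H_fixes_v0_imp_one[OF hq])
qed

lemma GG_fixes_x0_imp_one: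
  assumes "a \<in> GG m n H" "a *\<^sub>v x0 = x0"
  shows "a = 1\<^sub>m (m*n)"
proof -
  obtain hs s where g: "wr_coords hs s" and a: "a = wr m n hs s" using assms(1) unfolding GG_eq by auto
  have s: "s permutes {..<n}" using g unfolding wr_coords_def by auto
  have fixed: "wr m n hs s *\<^sub>v x0 = x0" using assms(2) a by simp
  have "s = id"
  proof
    fix x show "s x = id x"
      using wr_fixes_x0_block(1)[OF g fixed, of x] permutes_inverses[OF s, of x] permutes_not_in[OF s, of x]
      by (cases "x < n") auto
  qed
  moreover have "hs = (\<lambda>_. 1\<^sub>m m)"
  proof
    fix q show "hs q = 1\<^sub>m m"
      using wr_fixes_x0_block(2)[OF g fixed, of q] g unfolding wr_coords_def by (cases "q < n") auto
  qed
  ultimately show ?thesis using a wr_one by simp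
qed

lemma dmin_pos:
  assumes "GG m n H - Stab (GG m n H) x0 \<noteq> {}"
  shows "0 < dmin (GG m n H) x0"
proof -
  define S where "S = {vnorm (a *\<^sub>v x0 - x0) | a. a \<in> GG m n H - Stab (GG m n H) x0}"
  have "finite S" unfolding S_def using GG_finite by auto
  moreover have "S \<noteq> {}" unfolding S_def using assms by auto
  moreover have "0 < d" if d: "d \<in> S" for d
  proof -
    obtain a where a: "a \<in> GG m n H - Stab (GG m n H) x0" "d = vnorm (a *\<^sub>v x0 - x0)"
      using d unfolding S_def by blast
    then have a: "a \<in> GG m n H" "a *\<^sub>v x0 \<noteq> x0" "d = vnorm (a *\<^sub>v x0 - x0)"
      unfolding Stab_def by auto
    then have "vnorm (a *\<^sub>v x0 - x0) \<noteq> 0"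
      using vnorm_eq_0_imp_eq[OF _ x0_carrier] GG_carrier[OF a(1)] x0_carrier by (metis mult_mat_vec_carrier)
    then show ?thesis using vnorm_nonneg a(3) by (simp add: order_le_neq_trans)
  qed
  ultimately show ?thesis unfolding dmin_def S_def[symmetric] using Min_in by blast
qed

definition alignment :: "complex vec \<Rightarrow> nat \<Rightarrow> real" where
  "alignment y q = re_inner (block_vec m y q) v0"

definition correlation :: "(nat \<Rightarrow> complex mat) \<Rightarrow> (nat \<Rightarrow> nat) \<Rightarrow> complex vec \<Rightarrow> real" where
  "correlation hs s y = (\<Sum>q<n. u q * re_inner (hs q *\<^sub>v block_vec m y (pinv s q)) v0)"

text \<open>G acts by isometries, so distances from the points a y to x0 differ only in the correlation term.\<close>

lemma vnorm_wr_diff_x0_power2: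
  assumes g: "wr_coords hs s" and y: "y \<in> carrier_vec (m*n)"
  shows "vnorm (wr m n hs s *\<^sub>v y - x0) ^ 2 = vnorm y ^ 2 + (\<Sum>q<n. u q ^ 2) - 2 * correlation hs s y"
proof -
  have s: "s permutes {..<n}" using g unfolding wr_coords_def by auto
  have wy: "wr m n hs s *\<^sub>v y \<in> carrier_vec (m*n)" using y by simp
  have blocks: "vnorm (block_vec m (wr m n hs s *\<^sub>v y - x0) q) ^ 2 = vnorm (block_vec m y (pinv s q)) ^ 2
      - 2 * u q * re_inner (hs q *\<^sub>v block_vec m y (pinv s q)) v0 + u q ^ 2" if q: "q < n" for q
  proof -
    have h: "hs q \<in> H" using g q unfolding wr_coords_def by auto
    have "block_vec m (wr m n hs s *\<^sub>v y - x0) q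
        = hs q *\<^sub>v block_vec m y (pinv s q) - complex_of_real (u q) \<cdot>\<^sub>v v0"
      using block_vec_minus[OF wy x0_carrier q] block_vec_wr[OF g y q] block_vec_x0[OF q] by simp
    moreover have "hs q *\<^sub>v block_vec m y (pinv s q) \<in> carrier_vec m" using H_carrier[OF h] by auto
    ultimately show ?thesis
      using vnorm_diff_smult_power2[OF _ v0 v0_norm] unitary_vnorm[OF H_unitary[OF h]] by simp
  qed
  have "vnorm (wr m n hs s *\<^sub>v y - x0) ^ 2 = (\<Sum>q<n. vnorm (block_vec m (wr m n hs s *\<^sub>v y - x0) q) ^ 2)"
    using wy x0_carrier by (intro vnorm_power2_blocks) auto
  also have "\<dots> = (\<Sum>q<n. vnorm (block_vec m y (pinv s q)) ^ 2) + (\<Sum>q<n. u q ^ 2) - 2 * correlation hs s y"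
    by (simp add: blocks correlation_def sum.distrib sum_subtractf sum_distrib_left mult.assoc)
  also have "(\<Sum>q<n. vnorm (block_vec m y (pinv s q)) ^ 2) = vnorm y ^ 2"
    using sum.permute[OF permutes_inv[OF s], of "\<lambda>q. vnorm (block_vec m y q) ^ 2"]
      vnorm_power2_blocks[OF y] by simp
  finally show ?thesis .
qed

lemma vnorm_wr_diff_x0_le_iff:
  assumes "wr_coords hs s" "wr_coords hs' s'" "y \<in> carrier_vec (m*n)"
  shows "vnorm (wr m n hs s *\<^sub>v y - x0) \<le> vnorm (wr m n hs' s' *\<^sub>v y - x0)
     \<longleftrightarrow> correlation hs' s' y \<le> correlation hs s y"
  unfolding vnorm_le_iff_power2 vnorm_wr_diff_x0_power2[OF assms(1,3)]
    vnorm_wr_diff_x0_power2[OF assms(2,3)] by simp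

lemma correlation_one: "correlation (\<lambda>_. 1\<^sub>m m) id y = (\<Sum>q<n. u q * alignment y q)"
  unfolding correlation_def alignment_def by simp

lemma correlation_single_block:
  assumes "p < n"
  shows "correlation (single_block m p b) id y = (\<Sum>q<n. u q * alignment y q)
     + u p * (re_inner (b *\<^sub>v block_vec m y p) v0 - alignment y p)"
proof -
  have "correlation (single_block m p b) id y = (\<Sum>q<n. u q * alignment y q +
     (if q = p then u p * (re_inner (b *\<^sub>v block_vec m y p) v0 - alignment y p) else 0))"
    unfolding correlation_def alignment_def single_block_def by (intro sum.cong refl) (auto simp: algebra_simps)
  then show ?thesis using assms by (simp add: sum.distrib)
qed

lemma correlation_cyc:
  "j \<le> l \<Longrightarrow> correlation (\<lambda>_. 1\<^sub>m m) (cyc j l) y = (\<Sum>q<n. u q * alignment y (cycinv j l q))"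
  unfolding correlation_def alignment_def inv_cyc by simp

text \<open>After step k of the decoder, every block among the first k div 2 + 1 is best aligned with v0
  within its H-orbit, and the first (k+1) div 2 blocks are sorted by alignment.\<close>

definition decoding_invariant :: "nat \<Rightarrow> nat \<Rightarrow> complex vec \<Rightarrow> bool" where
  "decoding_invariant P Q y \<longleftrightarrow> y \<in> carrier_vec (m*n) \<and>
     (\<forall>q<P. \<forall>b\<in>H. re_inner (b *\<^sub>v block_vec m y q) v0 \<le> alignment y q) \<and>
     (\<forall>q. q + 1 < Q \<longrightarrow> alignment y q \<le> alignment y (q+1))"

lemma block_vec_single_block:
  "p < n \<Longrightarrow> c \<in> H \<Longrightarrow> y \<in> carrier_vec (m*n) \<Longrightarrow> q < n \<Longrightarrow>
    block_vec m (wr m n (single_block m p c) id *\<^sub>v y) q = (if q = p then c *\<^sub>v block_vec m y p else block_vec m y q)"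
  using block_vec_wr[OF wr_coords_single_block] by (simp add: single_block_def)

lemma block_vec_cyc:
  "j \<le> l \<Longrightarrow> l < n \<Longrightarrow> y \<in> carrier_vec (m*n) \<Longrightarrow> q < n \<Longrightarrow>
    block_vec m (wr m n (\<lambda>_. 1\<^sub>m m) (cyc j l) *\<^sub>v y) q = block_vec m y (cycinv j l q)"
  using block_vec_wr[OF wr_coords_cyc] by (simp add: inv_cyc)

lemma decoding_invariant_diag_step:
  assumes k: "k = 1 \<or> even k" "k \<le> 2*n-1" and inv: "decoding_invariant (k div 2) (k div 2) y"
    and e: "e \<in> CL m n H k" and opt: "\<forall>a\<in>CL m n H k. vnorm (e *\<^sub>v y - x0) \<le> vnorm (a *\<^sub>v y - x0)"
  shows "decoding_invariant (k div 2 + 1) (k div 2) (e *\<^sub>v y)"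
proof -
  define p where "p = k div 2"
  have p: "p < n" using k n_pos unfolding p_def by auto
  obtain c where c: "c \<in> H" and ec: "e = wr m n (single_block m p c) id"
    using e CL_diag[OF k(1)] unfolding p_def by blast
  have y: "y \<in> carrier_vec (m*n)" using inv unfolding decoding_invariant_def by auto
  have best: "re_inner (b *\<^sub>v block_vec m y p) v0 \<le> re_inner (c *\<^sub>v block_vec m y p) v0" if b: "b \<in> H" for b
  proof -
    have "vnorm (wr m n (single_block m p c) id *\<^sub>v y - x0) \<le> vnorm (wr m n (single_block m p b) id *\<^sub>v y - x0)"
      using opt b ec CL_diag[OF k(1)] unfolding p_def by auto
    then have "correlation (single_block m p b) id y \<le> correlation (single_block m p c) id y"
      using vnorm_wr_diff_x0_le_iff[OF wr_coords_single_block[OF p c] wr_coords_single_block[OF p b] y] by simp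
    then show ?thesis using u_pos_less[OF p]
      unfolding correlation_single_block[OF p] by (simp add: algebra_simps)
  qed
  have "b *\<^sub>v (c *\<^sub>v block_vec m y p) = (b * c) *\<^sub>v block_vec m y p" if "b \<in> H" for b
    using H_carrier[OF that] H_carrier[OF c] by simp
  then show ?thesis
    using inv p y best H_mult[OF _ c] block_vec_single_block[OF p c y]
    unfolding p_def[symmetric] ec decoding_invariant_def alignment_def by (auto simp: less_Suc_eq)
qed

text \<open>The optimal cycle (j ... l) inserts the new block l between its neighbours in alignment order.\<close>

lemma optimal_cyc_alignment_bounds:
  assumes l: "l < n" and y: "y \<in> carrier_vec (m*n)" and jl: "j \<le> l"
    and opt: "\<forall>j'\<le>l. vnorm (wr m n (\<lambda>_. 1\<^sub>m m) (cyc j l) *\<^sub>v y - x0)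
                      \<le> vnorm (wr m n (\<lambda>_. 1\<^sub>m m) (cyc j' l) *\<^sub>v y - x0)"
  shows "j < l \<Longrightarrow> alignment y l \<le> alignment y j"
    and "0 < j \<Longrightarrow> alignment y (j-1) \<le> alignment y l"
proof -
  have le: "(\<Sum>q<n. u q * alignment y (cycinv j' l q)) \<le> (\<Sum>q<n. u q * alignment y (cycinv j l q))"
    if "j' \<le> l" for j'
    using opt that vnorm_wr_diff_x0_le_iff[OF wr_coords_cyc[OF jl l] wr_coords_cyc[OF that l] y]
    by (auto simp: correlation_cyc[OF jl] correlation_cyc[OF that])
  show "alignment y l \<le> alignment y j" if "j < l"
  proof -
    have "(u (j+1) - u j) * (alignment y l - alignment y j) \<le> 0"
      using le[of "j+1"] that unfolding sum_cycinv_shift[OF that l] by simp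
    moreover have "u j < u (j+1)" using u_strict_mono[of j "j+1"] that l by simp
    ultimately show ?thesis by (simp add: mult_le_0_iff)
  qed
  show "alignment y (j-1) \<le> alignment y l" if "0 < j"
  proof -
    have jj: "j - 1 < l" "j - 1 + 1 = j" using that jl by auto
    have "0 \<le> (u j - u (j-1)) * (alignment y l - alignment y (j-1))"
      using le[of "j-1"] sum_cycinv_shift[OF jj(1) l, of u "alignment y"] jj by simp
    moreover have "u (j-1) < u j" using u_strict_mono[of "j-1" j] that jl l by simp
    ultimately show ?thesis by (simp add: zero_le_mult_iff)
  qed
qed

lemma decoding_invariant_cyc_step:
  assumes k: "odd k" "k \<noteq> 1" "k \<le> 2*n-1" and inv: "decoding_invariant (k div 2 + 1) (k div 2) y"
    and e: "e \<in> CL m n H k" and opt: "\<forall>a\<in>CL m n H k. vnorm (e *\<^sub>v y - x0) \<le> vnorm (a *\<^sub>v y - x0)"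
  shows "decoding_invariant (k div 2 + 1) (k div 2 + 1) (e *\<^sub>v y)"
proof -
  define l where "l = k div 2"
  have l: "l < n" using k n_pos unfolding l_def by auto
  obtain j where jl: "j \<le> l" and ej: "e = wr m n (\<lambda>_. 1\<^sub>m m) (cyc j l)"
    using e CL_odd[OF k(1,2)] unfolding l_def by blast
  have y: "y \<in> carrier_vec (m*n)" using inv unfolding decoding_invariant_def by auto
  have "\<forall>j'\<le>l. vnorm (wr m n (\<lambda>_. 1\<^sub>m m) (cyc j l) *\<^sub>v y - x0) \<le> vnorm (wr m n (\<lambda>_. 1\<^sub>m m) (cyc j' l) *\<^sub>v y - x0)"
    using opt ej CL_odd[OF k(1,2)] unfolding l_def by auto
  note bounds = optimal_cyc_alignment_bounds[OF l y jl this]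
  let ?y = "wr m n (\<lambda>_. 1\<^sub>m m) (cyc j l) *\<^sub>v y"
  have align: "alignment ?y q = alignment y (cycinv j l q)" if "q < n" for q
    unfolding alignment_def using block_vec_cyc[OF jl l y that] by simp
  have sorted: "alignment y q \<le> alignment y (q+1)" if "q + 1 < l" for q
    using inv that unfolding decoding_invariant_def l_def by auto
  have "alignment y (cycinv j l q) \<le> alignment y (cycinv j l (q+1))" if q: "q + 1 < l + 1" for q
  proof -
    consider "q + 1 < j" | "q + 1 = j" | "q = j" | "j < q" by linarith
    then show ?thesis
    proof cases
      case 1 then show ?thesis using sorted[of q] jl by (simp add: cycinv_def)
    next
      case 2 then show ?thesis using bounds(2) jl q by (auto simp: cycinv_def)
    next
      case 3 then show ?thesis using bounds(1) q by (auto simp: cycinv_def)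
    next
      case 4 then show ?thesis using sorted[of "q-1"] q by (auto simp: cycinv_def)
    qed
  qed
  moreover have "cycinv j l q < l + 1" if "q < l + 1" for q using cycinv_le[OF jl, of q] that by simp
  ultimately show ?thesis
    using inv l y block_vec_cyc[OF jl l y] align
    unfolding l_def[symmetric] ej decoding_invariant_def by auto
qed

lemma decoding_invariant_imp_optimal:
  assumes inv: "decoding_invariant n n y" and g: "wr_coords hs s"
  shows "correlation hs s y \<le> correlation (\<lambda>_. 1\<^sub>m m) id y"
proof -
  have s: "s permutes {..<n}" using g unfolding wr_coords_def by auto
  have sorted: "alignment y i \<le> alignment y j" if "i \<le> j" "j < n" for i j
    using that
  proof (induction j)
    case (Suc j)
    then show ?case using inv unfolding decoding_invariant_def by (cases "i = Suc j") force+
  qed simp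
  have "correlation hs s y \<le> (\<Sum>q<n. u q * alignment y (pinv s q))"
    unfolding correlation_def
  proof (rule sum_mono)
    fix q assume q: "q \<in> {..<n}"
    have "re_inner (hs q *\<^sub>v block_vec m y (pinv s q)) v0 \<le> alignment y (pinv s q)"
      using inv wr_coords_pinv_less[OF g] q g unfolding decoding_invariant_def wr_coords_def by auto
    then show "u q * re_inner (hs q *\<^sub>v block_vec m y (pinv s q)) v0 \<le> u q * alignment y (pinv s q)"
      using u_pos_less[of q] q by (intro mult_left_mono) auto
  qed
  also have "\<dots> = (\<Sum>q<n. u (s q) * alignment y q)"
    using sum.permute[OF s, of "\<lambda>q. u q * alignment y (pinv s q)"] permutes_inverses(2)[OF s] by simp
  also have "\<dots> \<le> (\<Sum>q<n. u q * alignment y q)"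
    by (rule rearrangement_inequality[OF u_mono sorted s])
  finally show ?thesis unfolding correlation_one .
qed

end

context wreath_code
begin

lemma decoding_run_CL: "decoding_run m n H x0 r d \<Longrightarrow> \<forall>k\<in>{1..2*n-1}. d k \<in> CL m n H k"
  unfolding decoding_run_def by blast

lemma decoding_invariant_sorted_le_1:
  "decoding_invariant P Q y \<Longrightarrow> Q' \<le> max Q 1 \<Longrightarrow> decoding_invariant P Q' y"
  unfolding decoding_invariant_def by auto

lemma decoding_run_step:
  assumes run: "decoding_run m n H x0 r d" and r: "r \<in> carrier_vec (m*n)" and k: "Suc k \<le> 2*n-1"
  shows "lprod (m*n) d (Suc k) *\<^sub>v r = d (Suc k) *\<^sub>v (lprod (m*n) d k *\<^sub>v r)"
    and "d (Suc k) \<in> CL m n H (Suc k)"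
    and "\<forall>a\<in>CL m n H (Suc k). vnorm (d (Suc k) *\<^sub>v (lprod (m*n) d k *\<^sub>v r) - x0)
                              \<le> vnorm (a *\<^sub>v (lprod (m*n) d k *\<^sub>v r) - x0)"
proof -
  have "lprod (m*n) d k \<in> GG m n H" using lprod_CL_GG decoding_run_CL[OF run] k by simp
  moreover have "d (Suc k) \<in> GG m n H" using decoding_run_CL[OF run] CL_subset_GG[of "Suc k"] k by auto
  ultimately show "lprod (m*n) d (Suc k) *\<^sub>v r = d (Suc k) *\<^sub>v (lprod (m*n) d k *\<^sub>v r)"
    using r GG_carrier by (metis assoc_mult_mat_vec lprod.simps(2))
  have "Suc k \<in> {1..2*n-1}" using k by simp
  then have "d (Suc k) \<in> CL m n H (Suc k) \<and> (\<forall>a\<in>CL m n H (Suc k).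
      vnorm (d (Suc k) *\<^sub>v (lprod (m*n) d (Suc k - 1) *\<^sub>v r) - x0)
        \<le> vnorm (a *\<^sub>v (lprod (m*n) d (Suc k - 1) *\<^sub>v r) - x0))"
    using run unfolding decoding_run_def by blast
  then show "d (Suc k) \<in> CL m n H (Suc k)"
    and "\<forall>a\<in>CL m n H (Suc k). vnorm (d (Suc k) *\<^sub>v (lprod (m*n) d k *\<^sub>v r) - x0)
                              \<le> vnorm (a *\<^sub>v (lprod (m*n) d k *\<^sub>v r) - x0)" by simp_all
qed

lemma decoding_run_invariant:
  assumes run: "decoding_run m n H x0 r d" and r: "r \<in> carrier_vec (m*n)"
  shows "1 \<le> k \<Longrightarrow> k \<le> 2*n-1 \<Longrightarrow>
    decoding_invariant (k div 2 + 1) ((k+1) div 2) (lprod (m*n) d k *\<^sub>v r)"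
proof (induction k)
  case (Suc k)
  note step = decoding_run_step[OF run r Suc.prems(2)]
  show ?case
  proof (cases "Suc k = 1 \<or> even (Suc k)")
    case diag: True
    have "decoding_invariant (Suc k div 2) (Suc k div 2) (lprod (m*n) d k *\<^sub>v r)"
    proof (cases "k = 0")
      case True
      then show ?thesis using r unfolding decoding_invariant_def by simp
    next
      case False
      then have "k div 2 + 1 = Suc k div 2" "(k+1) div 2 = Suc k div 2" using diag by auto
      then show ?thesis using Suc.IH Suc.prems False by simp
    qed
    then have "decoding_invariant (Suc k div 2 + 1) (Suc k div 2) (lprod (m*n) d (Suc k) *\<^sub>v r)"
      unfolding step(1) by (rule decoding_invariant_diag_step[OF diag Suc.prems(2) _ step(2,3)])
    moreover have "(Suc k + 1) div 2 \<le> max (Suc k div 2) 1" using diag by auto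
    ultimately show ?thesis by (rule decoding_invariant_sorted_le_1)
  next
    case False
    then have odd: "odd (Suc k)" "Suc k \<noteq> 1" by auto
    then have "1 \<le> k" by (cases k) auto
    from odd have idx: "k div 2 + 1 = Suc k div 2 + 1" "(k+1) div 2 = Suc k div 2"
      "(Suc k + 1) div 2 = Suc k div 2 + 1" by auto
    have "decoding_invariant (Suc k div 2 + 1) (Suc k div 2) (lprod (m*n) d k *\<^sub>v r)"
      using Suc.IH \<open>1 \<le> k\<close> Suc.prems idx by simp
    then show ?thesis
      unfolding step(1) idx by (rule decoding_invariant_cyc_step[OF odd Suc.prems(2) _ step(2,3)])
  qed
qed simp

lemma decoding_invariant_imp_nearest:
  assumes inv: "decoding_invariant n n y" and a: "a \<in> GG m n H"
  shows "vnorm (y - x0) \<le> vnorm (a *\<^sub>v y - x0)"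
proof -
  obtain hs s where g: "wr_coords hs s" and a: "a = wr m n hs s" using a unfolding GG_eq by auto
  have y: "y \<in> carrier_vec (m*n)" using inv unfolding decoding_invariant_def by simp
  have "vnorm (wr m n (\<lambda>_. 1\<^sub>m m) id *\<^sub>v y - x0) \<le> vnorm (wr m n hs s *\<^sub>v y - x0)"
    using decoding_invariant_imp_optimal[OF inv g] vnorm_wr_diff_x0_le_iff[OF wr_coords_one g y] by simp
  then show ?thesis using a y by (simp add: wr_one)
qed

text \<open>The decoder returns exactly the h with r in DR(h): its last state D r is nearest to x0 among
  all a D r, while h r = (h D^-1) (D r) is strictly nearer unless D = h.\<close>

lemma decoding_run_output:
  assumes run: "decoding_run m n H x0 r d" and r: "r \<in> DR (m*n) (GG m n H) x0 h"
    and h: "h \<in> GG m n H"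
  shows "lprod (m*n) d (2*n-1) = h"
proof (rule ccontr)
  define D where "D = lprod (m*n) d (2*n-1)"
  assume "lprod (m*n) d (2*n-1) \<noteq> h"
  then have ne: "D \<noteq> h" unfolding D_def .
  have rc: "r \<in> carrier_vec (m*n)" using r unfolding DR_def by auto
  have DG: "D \<in> GG m n H" unfolding D_def by (rule lprod_CL_GG[OF order.refl decoding_run_CL[OF run]])
  have "(2*n-1) div 2 + 1 = n" "(2*n-1+1) div 2 = n" using n_pos by auto
  then have inv: "decoding_invariant n n (D *\<^sub>v r)"
    using decoding_run_invariant[OF run rc, of "2*n-1"] n_pos unfolding D_def by simp
  have "D \<notin> {s * h | s. s \<in> Stab (GG m n H) x0}"
  proof
    assume "D \<in> {s * h | s. s \<in> Stab (GG m n H) x0}"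
    then obtain s where s: "s \<in> GG m n H" "s *\<^sub>v x0 = x0" "D = s * h" unfolding Stab_def by blast
    then have "s = 1\<^sub>m (m*n)" by (intro GG_fixes_x0_imp_one)
    then show False using s(3) ne GG_carrier[OF h] by simp
  qed
  then have lt: "vnorm (h *\<^sub>v r - x0) < vnorm (D *\<^sub>v r - x0)" using r DG unfolding DR_def by blast
  obtain Di where Di: "Di \<in> GG m n H" "Di * D = 1\<^sub>m (m*n)" using GG_inverse[OF DG] by blast
  note carrier = GG_carrier[OF h] GG_carrier[OF Di(1)] GG_carrier[OF DG] rc
  have "Di *\<^sub>v (D *\<^sub>v r) = (Di * D) *\<^sub>v r" using carrier by simp
  then have "(h * Di) *\<^sub>v (D *\<^sub>v r) = h *\<^sub>v r" using carrier Di(2) by simp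
  then show False
    using lt decoding_invariant_imp_nearest[OF inv GG_mult[OF h Di(1)]] by simp
qed

lemma nearest_neighbor_quotient:
  assumes g: "g \<in> GG m n H" and gi: "gi \<in> GG m n H" "gi * g = 1\<^sub>m (m*n)" and hi: "hi \<in> GG m n H"
    and nn: "nearest_neighbor (GG m n H) x0 (gi *\<^sub>v x0) (hi *\<^sub>v x0)"
  shows "g * hi \<in> NG (GG m n H) x0" "g * hi \<noteq> 1\<^sub>m (m*n)"
proof -
  note carrier = GG_carrier[OF g] GG_carrier[OF gi(1)] GG_carrier[OF hi] x0_carrier
  have nn: "GG m n H - Stab (GG m n H) x0 \<noteq> {}" "vnorm (gi *\<^sub>v x0 - hi *\<^sub>v x0) = dmin (GG m n H) x0"
    using nn unfolding nearest_neighbor_def by auto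
  have "g *\<^sub>v (gi *\<^sub>v x0) = (g * gi) *\<^sub>v x0" using carrier by simp
  also have "\<dots> = x0" using mat_mult_left_right_inverse[OF carrier(2,1) gi(2)] carrier by simp
  finally have "x0 - (g * hi) *\<^sub>v x0 = g *\<^sub>v (gi *\<^sub>v x0) - g *\<^sub>v (hi *\<^sub>v x0)"
    using carrier by simp
  also have "\<dots> = g *\<^sub>v (gi *\<^sub>v x0 - hi *\<^sub>v x0)"
    using carrier by (simp add: mult_minus_distrib_mat_vec)
  finally have dist: "vnorm (x0 - (g * hi) *\<^sub>v x0) = dmin (GG m n H) x0"
    using GG_vnorm[OF g] nn(2) carrier by simp
  have "x0 \<in> (\<lambda>a. a *\<^sub>v x0) ` GG m n H"
    using GG_one x0_carrier by (intro image_eqI[of _ _ "1\<^sub>m (m*n)"]) auto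
  then show "g * hi \<in> NG (GG m n H) x0"
    unfolding NG_def nearest_neighbor_def using GG_mult[OF g hi] nn(1) dist by blast
  show "g * hi \<noteq> 1\<^sub>m (m*n)"
  proof
    assume "g * hi = 1\<^sub>m (m*n)"
    then have "vnorm (x0 - (g * hi) *\<^sub>v x0) = 0" using x0_carrier by simp
    then show False using dist dmin_pos[OF nn(1)] by simp
  qed
qed

end

section \<open>Canonical forms\<close>

context wreath_product
begin

text \<open>For K \<ge> 1 these are the coordinates of the elements of Gk m n H K.\<close>

definition Gk_coords :: "nat \<Rightarrow> (nat \<Rightarrow> complex mat) \<Rightarrow> (nat \<Rightarrow> nat) \<Rightarrow> bool" where
  "Gk_coords K hs s \<longleftrightarrow> wr_coords hs s \<and> s permutes {..<(K+1) div 2} \<and> (\<forall>i. K div 2 + 1 \<le> i \<longrightarrow> hs i = 1\<^sub>m m)"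

lemma Gk_coords_leader_mult:
  assumes K: "Suc K \<le> 2*n-1" and x: "Gk_coords K hs s" and e: "e \<in> CL m n H (Suc K)"
  obtains hs' s' where "Gk_coords (Suc K) hs' s'" "e * wr m n hs s = wr m n hs' s'"
proof -
  define l where "l = Suc K div 2"
  have ln: "l < n" using K unfolding l_def by auto
  have g: "wr_coords hs s" and sp: "s permutes {..<(K+1) div 2}"
    and one: "\<forall>i. K div 2 + 1 \<le> i \<longrightarrow> hs i = 1\<^sub>m m" using x unfolding Gk_coords_def by auto
  show ?thesis
  proof (cases "Suc K = 1 \<or> even (Suc K)")
    case True
    then obtain b where b: "b \<in> H" and e: "e = wr m n (single_block m l b) id"
      using e CL_diag unfolding l_def by blast
    have gb: "wr_coords (single_block m l b) id" by (rule wr_coords_single_block[OF ln b])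
    have "(K + 1) div 2 \<le> (Suc K + 1) div 2" "K div 2 \<le> Suc K div 2" by (simp_all add: div_le_mono)
    then have "id \<circ> s permutes {..<(Suc K + 1) div 2}"
      using permutes_subset[OF sp, of "{..<(Suc K + 1) div 2}"] by simp
    moreover have "single_block m l b i * hs (pinv id i) = 1\<^sub>m m" if "Suc K div 2 + 1 \<le> i" for i
      using that one \<open>K div 2 \<le> Suc K div 2\<close> unfolding l_def single_block_def by simp
    ultimately have "Gk_coords (Suc K) (\<lambda>i. single_block m l b i * hs (pinv id i)) (id \<circ> s)"
      using wr_coords_mult[OF gb g] unfolding Gk_coords_def by blast
    then show ?thesis using that wr_mult_coords[OF gb g] e by simp
  next
    case False
    then have odd: "odd (Suc K)" "Suc K \<noteq> 1" by auto
    have Kl: "K div 2 + 1 = l + 1" "(K + 1) div 2 = l" "(Suc K + 1) div 2 = l + 1" "Suc K div 2 = l"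
      using odd unfolding l_def by auto
    obtain j where j: "j \<le> l" and e: "e = wr m n (\<lambda>_. 1\<^sub>m m) (cyc j l)"
      using e CL_odd[OF odd] unfolding l_def by blast
    have gc: "wr_coords (\<lambda>_. 1\<^sub>m m) (cyc j l)" by (rule wr_coords_cyc[OF j ln])
    have "s permutes {..<l+1}" using permutes_subset[OF sp] Kl by auto
    then have "cyc j l \<circ> s permutes {..<(Suc K + 1) div 2}"
      using permutes_compose[OF _ cyc_permutes[OF j, of "l+1"]] Kl by simp
    moreover have "\<forall>i. Suc K div 2 + 1 \<le> i \<longrightarrow> 1\<^sub>m m * hs (pinv (cyc j l) i) = 1\<^sub>m m"
      using one Kl j unfolding inv_cyc[OF j] cycinv_def by auto
    ultimately have "Gk_coords (Suc K) (\<lambda>i. 1\<^sub>m m * hs (pinv (cyc j l) i)) (cyc j l \<circ> s)"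
      using wr_coords_mult[OF gc g] unfolding Gk_coords_def by blast
    then show ?thesis using that wr_mult_coords[OF gc g] e by simp
  qed
qed

lemma lprod_Gk_coords:
  "K \<le> 2*n-1 \<Longrightarrow> \<forall>k\<in>{1..K}. c k \<in> CL m n H k \<Longrightarrow>
    \<exists>hs s. Gk_coords K hs s \<and> lprod (m*n) c K = wr m n hs s"
proof (induction K)
  case 0
  have "Gk_coords 0 (\<lambda>_. 1\<^sub>m m) id" using wr_coords_one unfolding Gk_coords_def by auto
  moreover have "lprod (m*n) c 0 = wr m n (\<lambda>_. 1\<^sub>m m) id" by (simp add: wr_one)
  ultimately show ?case by blast
next
  case (Suc K)
  then obtain hs s where x: "Gk_coords K hs s" "lprod (m*n) c K = wr m n hs s" by auto
  have "c (Suc K) \<in> CL m n H (Suc K)" using Suc.prems(2) by simp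
  then obtain hs' s' where "Gk_coords (Suc K) hs' s'" "c (Suc K) * wr m n hs s = wr m n hs' s'"
    by (rule Gk_coords_leader_mult[OF Suc.prems(1) x(1)])
  then show ?case using x(2) by auto
qed

text \<open>The leader of step K+1 is read off from the product at the block l = (K+1) div 2, which G_K
  fixes: a diagonal leader is the entry there, a cycle leader is determined by the image of l.\<close>

lemma leader_cancel:
  assumes K: "Suc K \<le> 2*n-1" "1 \<le> K" and x: "Gk_coords K hs s" and x': "Gk_coords K hs' s'"
    and e: "e \<in> CL m n H (Suc K)" and e': "e' \<in> CL m n H (Suc K)"
    and eq: "e * wr m n hs s = e' * wr m n hs' s'"
  shows "e = e'"
proof -
  define l where "l = Suc K div 2"
  have ln: "l < n" using K unfolding l_def by auto
  have g: "wr_coords hs s" "wr_coords hs' s'" using x x' unfolding Gk_coords_def by auto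
  show ?thesis
  proof (cases "Suc K = 1 \<or> even (Suc K)")
    case diag: True
    obtain b b' where b: "b \<in> H" "e = wr m n (single_block m l b) id"
      and b': "b' \<in> H" "e' = wr m n (single_block m l b') id"
      using e e' CL_diag[OF diag] unfolding l_def by blast
    note gb = wr_coords_single_block[OF ln b(1)] and gb' = wr_coords_single_block[OF ln b'(1)]
    have "(\<lambda>i. single_block m l b i * hs (pinv id i)) = (\<lambda>i. single_block m l b' i * hs' (pinv id i))"
      using eq wr_coords_inj(1)[OF wr_coords_mult[OF gb g(1)] wr_coords_mult[OF gb' g(2)]]
      unfolding b b' wr_mult_coords[OF gb g(1)] wr_mult_coords[OF gb' g(2)] by blast
    from fun_cong[OF this, of l] have "b * hs l = b' * hs' l" by (simp add: single_block_def)
    moreover have "K div 2 + 1 \<le> l" using diag K unfolding l_def by auto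
    ultimately have "hs l = 1\<^sub>m m" "hs' l = 1\<^sub>m m" using x x' unfolding Gk_coords_def by auto
    then have "b = b'"
      using \<open>b * hs l = b' * hs' l\<close> H_carrier[OF b(1)] H_carrier[OF b'(1)] by simp
    then show ?thesis using b(2) b'(2) by simp
  next
    case False
    then have odd: "odd (Suc K)" "Suc K \<noteq> 1" by auto
    obtain j j' where j: "j \<le> l" "e = wr m n (\<lambda>_. 1\<^sub>m m) (cyc j l)"
      and j': "j' \<le> l" "e' = wr m n (\<lambda>_. 1\<^sub>m m) (cyc j' l)"
      using e e' CL_odd[OF odd] unfolding l_def by blast
    note gc = wr_coords_cyc[OF j(1) ln] and gc' = wr_coords_cyc[OF j'(1) ln]
    have "cyc j l \<circ> s = cyc j' l \<circ> s'"
      using eq wr_coords_inj(2)[OF wr_coords_mult[OF gc g(1)] wr_coords_mult[OF gc' g(2)]]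
      unfolding j j' wr_mult_coords[OF gc g(1)] wr_mult_coords[OF gc' g(2)] by blast
    from fun_cong[OF this, of l] have "cyc j l (s l) = cyc j' l (s' l)" by simp
    moreover have "s l = l" "s' l = l"
      using x x' odd permutes_not_in[of s "{..<(K+1) div 2}" l] permutes_not_in[of s' "{..<(K+1) div 2}" l]
      unfolding Gk_coords_def l_def by auto
    ultimately have "j = j'" using cyc_last[OF j(1)] cyc_last[OF j'(1)] by simp
    then show ?thesis using j j' by simp
  qed
qed

lemma GG_left_cancel:
  assumes "e \<in> GG m n H" "x \<in> carrier_mat (m*n) (m*n)" "x' \<in> carrier_mat (m*n) (m*n)" "e * x = e * x'"
  shows "x = x'"
proof -
  obtain z where z: "z \<in> GG m n H" "z * e = 1\<^sub>m (m*n)" using GG_inverse[OF assms(1)] by blast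
  have "x = (z * e) * x" using z assms(2) by simp
  also have "\<dots> = z * (e * x')"
    using GG_carrier[OF z(1)] GG_carrier[OF assms(1)] assms(2,4) by (simp add: assoc_mult_mat)
  also have "\<dots> = (z * e) * x'"
    using GG_carrier[OF z(1)] GG_carrier[OF assms(1)] assms(3) by (simp add: assoc_mult_mat)
  finally show ?thesis using z assms(3) by simp
qed

lemma canonical_form_unique:
  "K \<le> 2*n-1 \<Longrightarrow> \<forall>k\<in>{1..K}. c k \<in> CL m n H k \<Longrightarrow> \<forall>k\<in>{1..K}. c' k \<in> CL m n H k \<Longrightarrow>
    lprod (m*n) c K = lprod (m*n) c' K \<Longrightarrow> \<forall>k\<in>{1..K}. c k = c' k"
proof (induction K)
  case (Suc K)
  obtain hs s where x: "Gk_coords K hs s" "lprod (m*n) c K = wr m n hs s"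
    using lprod_Gk_coords[of K c] Suc.prems(1,2) by force
  obtain hs' s' where x': "Gk_coords K hs' s'" "lprod (m*n) c' K = wr m n hs' s'"
    using lprod_Gk_coords[of K c'] Suc.prems(1,3) by force
  have e: "c (Suc K) \<in> CL m n H (Suc K)" "c' (Suc K) \<in> CL m n H (Suc K)" using Suc.prems by auto
  then have eG: "c (Suc K) \<in> GG m n H" "c' (Suc K) \<in> GG m n H"
    using CL_subset_GG[of "Suc K"] Suc.prems(1) by auto
  have eq: "c (Suc K) * wr m n hs s = c' (Suc K) * wr m n hs' s'" using Suc.prems(4) x(2) x'(2) by simp
  have leader: "c (Suc K) = c' (Suc K)"
  proof (cases "K = 0")
    case True
    then show ?thesis using Suc.prems(4) GG_carrier[OF eG(1)] GG_carrier[OF eG(2)] by simp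
  next
    case False
    then show ?thesis using leader_cancel[OF Suc.prems(1) _ x(1) x'(1) e eq] by simp
  qed
  have "lprod (m*n) c K = lprod (m*n) c' K"
    using GG_left_cancel[OF eG(1) _ _ eq[folded leader]] x(2) x'(2) by simp
  then have "\<forall>k\<in>{1..K}. c k = c' k" using Suc by simp
  then show ?case using leader by (auto simp: le_Suc_eq)
qed simp

end

section \<open>Multiplying a canonical form by an elementary generator\<close>

lemma lprod_cong: "(\<And>k. 1 \<le> k \<Longrightarrow> k \<le> K \<Longrightarrow> c k = c' k) \<Longrightarrow> lprod N c K = lprod N c' K"
  by (induction K) auto

lemma lprod_upd_Suc: "lprod N (c(Suc K := x)) (Suc K) = x * lprod N c K"
  using lprod_cong[of K "c(Suc K := x)" c N] by simp

lemma lprod_mult_absorb: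
  assumes "a \<in> carrier_mat N N" "c (Suc K) \<in> carrier_mat N N" "lprod N c K \<in> carrier_mat N N"
    and "a * c (Suc K) = e"
  shows "a * lprod N c (Suc K) = lprod N (c(Suc K := e)) (Suc K)"
proof -
  have "a * lprod N c (Suc K) = (a * c (Suc K)) * lprod N c K"
    using assms(1-3) by (simp add: assoc_mult_mat)
  then show ?thesis unfolding lprod_upd_Suc using assms(4) by simp
qed

lemma lprod_mult_pass:
  assumes "a \<in> carrier_mat N N" "a' \<in> carrier_mat N N" "c (Suc K) \<in> carrier_mat N N"
    "lprod N c K \<in> carrier_mat N N"
    and "a * c (Suc K) = c (Suc K) * a'" "a' * lprod N c K = lprod N c' K"
  shows "a * lprod N c (Suc K) = lprod N (c'(Suc K := c (Suc K))) (Suc K)"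
proof -
  have "a * lprod N c (Suc K) = (a * c (Suc K)) * lprod N c K"
    using assms(1,3,4) by (simp add: assoc_mult_mat)
  also have "\<dots> = c (Suc K) * (a' * lprod N c K)"
    unfolding assms(5) using assms(2-4) by (simp add: assoc_mult_mat)
  finally show ?thesis unfolding lprod_upd_Suc assms(6) .
qed

context wreath_product
begin

definition elementary_gens :: "nat \<Rightarrow> complex mat set" where
  "elementary_gens K = {wr m n (single_block m p b) id | p b. b \<in> H \<and> b \<noteq> 1\<^sub>m m \<and> p \<le> K div 2}
     \<union> {wr m n (\<lambda>_. 1\<^sub>m m) (adjswap i) | i. i + 1 \<le> (K - 1) div 2}"

lemma elementary_gens_cases:
  assumes "a \<in> elementary_gens K"
  obtains (block) p b where "a = wr m n (single_block m p b) id" "b \<in> H" "b \<noteq> 1\<^sub>m m" "p \<le> K div 2"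
    | (swap) i where "a = wr m n (\<lambda>_. 1\<^sub>m m) (adjswap i)" "i + 1 \<le> (K - 1) div 2"
  using assms unfolding elementary_gens_def by blast

lemma elementary_gens_GG:
  assumes "K \<le> 2*n-1" "a \<in> elementary_gens K"
  shows "a \<in> GG m n H"
  using assms(2)
proof (cases rule: elementary_gens_cases)
  case (block p b)
  then show ?thesis using assms(1) n_pos wr_in_GG wr_coords_single_block[of p b] by simp
next
  case (swap i)
  then show ?thesis using assms(1) wr_in_GG wr_coords_adjswap[of i] by simp
qed

definition absorbs_or_passes :: "nat \<Rightarrow> complex mat \<Rightarrow> complex mat \<Rightarrow> bool" where
  "absorbs_or_passes k a e \<longleftrightarrow> (\<exists>e'\<in>CL m n H k. e' \<noteq> e \<and> a * e = e')
     \<or> (2 \<le> k \<and> (\<exists>a'\<in>elementary_gens (k - 1). a * e = e * a'))"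

lemma single_block_elementary:
  "b \<in> H \<Longrightarrow> b \<noteq> 1\<^sub>m m \<Longrightarrow> p \<le> K div 2 \<Longrightarrow> wr m n (single_block m p b) id \<in> elementary_gens K"
  unfolding elementary_gens_def by blast

lemma adjswap_elementary:
  "i + 1 \<le> (K - 1) div 2 \<Longrightarrow> wr m n (\<lambda>_. 1\<^sub>m m) (adjswap i) \<in> elementary_gens K"
  unfolding elementary_gens_def by blast

lemma absorbs_or_passes_absorbI:
  "e' \<in> CL m n H k \<Longrightarrow> e' \<noteq> e \<Longrightarrow> a * e = e' \<Longrightarrow> absorbs_or_passes k a e"
  unfolding absorbs_or_passes_def by blast

lemma absorbs_or_passes_passI:
  "2 \<le> k \<Longrightarrow> a' \<in> elementary_gens (k - 1) \<Longrightarrow> a * e = e * a' \<Longrightarrow> absorbs_or_passes k a e"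
  unfolding absorbs_or_passes_def by blast

lemma single_block_mult_commute:
  assumes "p < n" "l < n" "p \<noteq> l" "b \<in> H" "c \<in> H"
  shows "wr m n (single_block m p b) id * wr m n (single_block m l c) id
       = wr m n (single_block m l c) id * wr m n (single_block m p b) id"
proof -
  have "(\<lambda>i. single_block m p b i * single_block m l c i) = (\<lambda>i. single_block m l c i * single_block m p b i)"
    using assms H_carrier[of b] H_carrier[of c] unfolding single_block_def by auto
  then show ?thesis
    using wr_mult_coords[OF wr_coords_single_block wr_coords_single_block] assms by simp
qed

lemma single_block_mult_same:
  assumes "l < n" "b \<in> H" "c \<in> H"
  shows "wr m n (single_block m l b) id * wr m n (single_block m l c) id = wr m n (single_block m l (b * c)) id"
proof -
  have "(\<lambda>i. single_block m l b i * single_block m l c i) = single_block m l (b * c)"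
    unfolding single_block_def by auto
  then show ?thesis
    using wr_mult_coords[OF wr_coords_single_block wr_coords_single_block] assms by simp
qed

lemma absorbs_or_passes_diag_block:
  assumes k: "k \<le> 2*n-1" "k = 1 \<or> even k" and e: "e \<in> CL m n H k"
    and b: "b \<in> H" "b \<noteq> 1\<^sub>m m" and p: "p \<le> k div 2"
  shows "absorbs_or_passes k (wr m n (single_block m p b) id) e"
proof -
  define l where "l = k div 2"
  have ln: "l < n" and pn: "p < n" using k p n_pos unfolding l_def by auto
  obtain c where c: "c \<in> H" and ec: "e = wr m n (single_block m l c) id"
    using e CL_diag[OF k(2)] unfolding l_def by blast
  show ?thesis
  proof (cases "p = l")
    case True
    have "wr m n (single_block m l (b * c)) id \<in> CL m n H k"
      using CL_diag[OF k(2)] H_mult[OF b(1) c] unfolding l_def by blast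
    moreover have "wr m n (single_block m l (b * c)) id \<noteq> e"
    proof
      assume "wr m n (single_block m l (b * c)) id = e"
      then have "single_block m l (b * c) = single_block m l c"
        using ec by (intro wr_coords_inj(1)[OF wr_coords_single_block[OF ln H_mult[OF b(1) c]]
            wr_coords_single_block[OF ln c]]) simp
      from fun_cong[OF this, of l] have "b * c = c" by (simp add: single_block_def)
      then show False using H_right_cancel[OF b(1) c] b(2) by simp
    qed
    moreover have "wr m n (single_block m p b) id * e = wr m n (single_block m l (b * c)) id"
      using single_block_mult_same[OF ln b(1) c] ec True by simp
    ultimately show ?thesis by (rule absorbs_or_passes_absorbI)
  next
    case False
    then have "p \<le> (k - 1) div 2" "2 \<le> k" using p k(2) unfolding l_def by auto
    then show ?thesis
      using absorbs_or_passes_passI[OF _ single_block_elementary[OF b]]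
        single_block_mult_commute[OF pn ln False b(1) c] ec by simp
  qed
qed

lemma absorbs_or_passes_diag_swap:
  assumes k: "k \<le> 2*n-1" "k = 1 \<or> even k" and e: "e \<in> CL m n H k"
    and i: "i + 1 \<le> (k - 1) div 2"
  shows "absorbs_or_passes k (wr m n (\<lambda>_. 1\<^sub>m m) (adjswap i)) e"
proof -
  define l where "l = k div 2"
  have ln: "l < n" and il: "i + 1 < l" and ia: "i + 1 < n" using k i n_pos unfolding l_def by auto
  obtain c where c: "c \<in> H" and ec: "e = wr m n (single_block m l c) id"
    using e CL_diag[OF k(2)] unfolding l_def by blast
  have "(\<lambda>j. 1\<^sub>m m * single_block m l c (pinv (adjswap i) j)) = (\<lambda>j. single_block m l c j * 1\<^sub>m m)"
    using il H_carrier[OF c] unfolding inv_adjswap single_block_def adjswap_def by auto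
  then have comm: "wr m n (\<lambda>_. 1\<^sub>m m) (adjswap i) * e = e * wr m n (\<lambda>_. 1\<^sub>m m) (adjswap i)"
    unfolding ec wr_mult_coords[OF wr_coords_adjswap[OF ia] wr_coords_single_block[OF ln c]]
      wr_mult_coords[OF wr_coords_single_block[OF ln c] wr_coords_adjswap[OF ia]] by simp
  have "i + 1 \<le> (k - 1 - 1) div 2" "2 \<le> k" using il k(2) unfolding l_def by auto
  then show ?thesis using absorbs_or_passes_passI[OF _ adjswap_elementary comm] by simp
qed

lemma absorbs_or_passes_cyc_block:
  assumes k: "k \<le> 2*n-1" "odd k" "k \<noteq> 1" and e: "e \<in> CL m n H k"
    and b: "b \<in> H" "b \<noteq> 1\<^sub>m m" and p: "p \<le> k div 2"
  shows "absorbs_or_passes k (wr m n (single_block m p b) id) e"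
proof -
  define l where "l = k div 2"
  have ln: "l < n" and pn: "p < n" using k p n_pos unfolding l_def by auto
  obtain j where j: "j \<le> l" and ej: "e = wr m n (\<lambda>_. 1\<^sub>m m) (cyc j l)"
    using e CL_odd[OF k(2,3)] unfolding l_def by blast
  define p' where "p' = cycinv j l p"
  have p'l: "p' \<le> l" unfolding p'_def using cycinv_le[OF j] p l_def by simp
  then have p'n: "p' < n" using ln by simp
  have "(\<lambda>i. single_block m p b i * 1\<^sub>m m) = (\<lambda>i. 1\<^sub>m m * single_block m p' b (pinv (cyc j l) i))"
  proof
    fix i
    have "cycinv j l i = p' \<longleftrightarrow> i = p" unfolding p'_def using cyc_cycinv[OF j] by metis
    then show "single_block m p b i * 1\<^sub>m m = 1\<^sub>m m * single_block m p' b (pinv (cyc j l) i)"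
      unfolding inv_cyc[OF j] single_block_def using H_carrier[OF b(1)] by auto
  qed
  then have comm: "wr m n (single_block m p b) id * e = e * wr m n (single_block m p' b) id"
    unfolding ej wr_mult_coords[OF wr_coords_single_block[OF pn b(1)] wr_coords_cyc[OF j ln]]
      wr_mult_coords[OF wr_coords_cyc[OF j ln] wr_coords_single_block[OF p'n b(1)]] by simp
  have "p' \<le> (k - 1) div 2" "2 \<le> k" using p'l k(2,3) unfolding l_def by (auto elim!: oddE)
  then show ?thesis using absorbs_or_passes_passI[OF _ single_block_elementary[OF b] comm] by simp
qed

lemma absorbs_or_passes_cyc_swap:
  assumes k: "k \<le> 2*n-1" "odd k" "k \<noteq> 1" and e: "e \<in> CL m n H k"
    and i: "i + 1 \<le> (k - 1) div 2"
  shows "absorbs_or_passes k (wr m n (\<lambda>_. 1\<^sub>m m) (adjswap i)) e"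
proof -
  define l where "l = k div 2"
  have kl: "(k - 1) div 2 = l" "2 \<le> k" using k(2,3) unfolding l_def by (auto elim!: oddE)
  have ln: "l < n" and il: "i + 1 \<le> l" and ia: "i + 1 < n"
    using k i kl n_pos unfolding l_def by auto
  obtain j where j: "j \<le> l" and ej: "e = wr m n (\<lambda>_. 1\<^sub>m m) (cyc j l)"
    using e CL_odd[OF k(2,3)] unfolding l_def by blast
  have prod: "wr m n (\<lambda>_. 1\<^sub>m m) (adjswap i) * e = wr m n (\<lambda>_. 1\<^sub>m m) (adjswap i \<circ> cyc j l)"
    unfolding ej by (rule wr_perm_mult[OF adjswap_permutes[OF ia] cyc_permutes[OF j ln]])
  consider "j = i" | "j = i + 1" | "i + 1 < j" | "j < i" by linarith
  then show ?thesis
  proof cases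
    case 1
    have "wr m n (\<lambda>_. 1\<^sub>m m) (cyc (i+1) l) \<in> CL m n H k" using CL_odd[OF k(2,3)] il l_def by auto
    moreover have "wr m n (\<lambda>_. 1\<^sub>m m) (cyc (i+1) l) \<noteq> e"
    proof
      assume "wr m n (\<lambda>_. 1\<^sub>m m) (cyc (i+1) l) = e"
      then have "cyc (i+1) l = cyc j l"
        using ej by (intro wr_coords_inj(2)[OF wr_coords_cyc[OF il ln] wr_coords_cyc[OF j ln]]) simp
      then have "cyc (i+1) l l = cyc j l l" by simp
      then show False using cyc_last[OF il] cyc_last[OF j] 1 by simp
    qed
    moreover have "wr m n (\<lambda>_. 1\<^sub>m m) (adjswap i) * e = wr m n (\<lambda>_. 1\<^sub>m m) (cyc (i+1) l)"
      using prod adjswap_cyc_start[OF il] 1 by simp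
    ultimately show ?thesis by (rule absorbs_or_passes_absorbI)
  next
    case 2
    have "wr m n (\<lambda>_. 1\<^sub>m m) (cyc i l) \<in> CL m n H k" using CL_odd[OF k(2,3)] il l_def by auto
    moreover have "wr m n (\<lambda>_. 1\<^sub>m m) (cyc i l) \<noteq> e"
    proof
      have il': "i \<le> l" using il by simp
      assume "wr m n (\<lambda>_. 1\<^sub>m m) (cyc i l) = e"
      then have "cyc i l = cyc j l"
        using ej by (intro wr_coords_inj(2)[OF wr_coords_cyc[OF il' ln] wr_coords_cyc[OF j ln]]) simp
      then have "cyc i l l = cyc j l l" by simp
      then show False using cyc_last[OF il'] cyc_last[OF j] 2 by simp
    qed
    moreover have "wr m n (\<lambda>_. 1\<^sub>m m) (adjswap i) * e = wr m n (\<lambda>_. 1\<^sub>m m) (cyc i l)"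
      using prod adjswap_cyc_start_Suc[OF il] 2 by simp
    ultimately show ?thesis by (rule absorbs_or_passes_absorbI)
  next
    case 3
    have "wr m n (\<lambda>_. 1\<^sub>m m) (adjswap i) * e = wr m n (\<lambda>_. 1\<^sub>m m) (cyc j l \<circ> adjswap i)"
      using prod adjswap_cyc_disjoint[OF 3 j] by simp
    also have "\<dots> = e * wr m n (\<lambda>_. 1\<^sub>m m) (adjswap i)"
      unfolding ej by (rule wr_perm_mult[OF cyc_permutes[OF j ln] adjswap_permutes[OF ia], symmetric])
    finally have comm: "wr m n (\<lambda>_. 1\<^sub>m m) (adjswap i) * e = e * wr m n (\<lambda>_. 1\<^sub>m m) (adjswap i)" .
    have "i + 1 \<le> (k - 1 - 1) div 2" using 3 j kl by auto
    then show ?thesis using absorbs_or_passes_passI[OF kl(2) adjswap_elementary comm] by simp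
  next
    case 4
    have i1: "i - 1 + 1 < n" using 4 ia by simp
    have "wr m n (\<lambda>_. 1\<^sub>m m) (adjswap i) * e = wr m n (\<lambda>_. 1\<^sub>m m) (cyc j l \<circ> adjswap (i - 1))"
      using prod adjswap_cyc_inside[OF 4 il] by simp
    also have "\<dots> = e * wr m n (\<lambda>_. 1\<^sub>m m) (adjswap (i - 1))"
      unfolding ej by (rule wr_perm_mult[OF cyc_permutes[OF j ln] adjswap_permutes[OF i1], symmetric])
    finally have comm: "wr m n (\<lambda>_. 1\<^sub>m m) (adjswap i) * e = e * wr m n (\<lambda>_. 1\<^sub>m m) (adjswap (i - 1))" .
    have "i - 1 + 1 \<le> (k - 1 - 1) div 2" using 4 il kl by auto
    then show ?thesis using absorbs_or_passes_passI[OF kl(2) adjswap_elementary comm] by simp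
  qed
qed

lemma absorbs_or_passes:
  assumes k: "k \<le> 2*n-1" and a: "a \<in> elementary_gens k" and e: "e \<in> CL m n H k"
  shows "absorbs_or_passes k a e"
  using a
proof (cases rule: elementary_gens_cases)
  case (block p b)
  then show ?thesis
    using absorbs_or_passes_diag_block[OF k _ e block(2-4)] absorbs_or_passes_cyc_block[OF k _ _ e block(2-4)]
    by (cases "k = 1 \<or> even k") auto
next
  case (swap i)
  then show ?thesis
    using absorbs_or_passes_diag_swap[OF k _ e swap(2)] absorbs_or_passes_cyc_swap[OF k _ _ e swap(2)]
    by (cases "k = 1 \<or> even k") auto
qed

lemma ex1_update_last:
  "e \<noteq> c (Suc K) \<Longrightarrow> \<exists>!k. k \<in> {1..Suc K} \<and> (c(Suc K := e)) k \<noteq> c k"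
  by (rule ex1I[of _ "Suc K"]) (auto split: if_splits)

lemma ex1_update_extend:
  assumes "\<exists>!k. k \<in> {1..K} \<and> c' k \<noteq> c k"
  shows "\<exists>!k. k \<in> {1..Suc K} \<and> (c'(Suc K := c (Suc K))) k \<noteq> c k"
proof -
  have "k \<in> {1..Suc K} \<and> (c'(Suc K := c (Suc K))) k \<noteq> c k \<longleftrightarrow> k \<in> {1..K} \<and> c' k \<noteq> c k" for k
    by (cases "k = Suc K") auto
  then show ?thesis using assms by simp
qed

text \<open>Multiplying a canonical form by an elementary generator of G_K changes exactly one of its
  coset leaders: the generator is moved rightwards until some leader absorbs it.\<close>

lemma elementary_gen_mult_lprod:
  "1 \<le> K \<Longrightarrow> K \<le> 2*n-1 \<Longrightarrow> \<forall>k\<in>{1..K}. c k \<in> CL m n H k \<Longrightarrow> a \<in> elementary_gens K \<Longrightarrow>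
   \<exists>c'. (\<forall>k\<in>{1..K}. c' k \<in> CL m n H k) \<and> a * lprod (m*n) c K = lprod (m*n) c' K
        \<and> (\<exists>!k. k \<in> {1..K} \<and> c' k \<noteq> c k)"
proof (induction K arbitrary: a)
  case (Suc K)
  have e: "c (Suc K) \<in> CL m n H (Suc K)" and cK: "\<forall>k\<in>{1..K}. c k \<in> CL m n H k"
    using Suc.prems(3) by auto
  have "lprod (m*n) c K \<in> GG m n H" using lprod_CL_GG[OF _ cK] Suc.prems(2) by simp
  moreover have "c (Suc K) \<in> GG m n H" using e CL_subset_GG[of "Suc K"] Suc.prems(2) by auto
  moreover have "a \<in> GG m n H" by (rule elementary_gens_GG[OF Suc.prems(2,4)])
  ultimately have carrier: "lprod (m*n) c K \<in> carrier_mat (m*n) (m*n)"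
    "c (Suc K) \<in> carrier_mat (m*n) (m*n)" "a \<in> carrier_mat (m*n) (m*n)"
    by (simp_all add: GG_carrier)
  have "absorbs_or_passes (Suc K) a (c (Suc K))" by (rule absorbs_or_passes[OF Suc.prems(2,4) e])
  then consider (absorb) e' where "e' \<in> CL m n H (Suc K)" "e' \<noteq> c (Suc K)" "a * c (Suc K) = e'"
    | (pass) a' where "1 \<le> K" "a' \<in> elementary_gens K" "a * c (Suc K) = c (Suc K) * a'"
    unfolding absorbs_or_passes_def by force
  then show ?case
  proof cases
    case absorb
    have "\<forall>k\<in>{1..Suc K}. (c(Suc K := e')) k \<in> CL m n H k" using Suc.prems(3) absorb(1) by simp
    moreover have "a * lprod (m*n) c (Suc K) = lprod (m*n) (c(Suc K := e')) (Suc K)"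
      by (rule lprod_mult_absorb[OF carrier(3,2,1) absorb(3)])
    moreover have "\<exists>!k. k \<in> {1..Suc K} \<and> (c(Suc K := e')) k \<noteq> c k"
      by (rule ex1_update_last[of e' c K, OF absorb(2)])
    ultimately show ?thesis by blast
  next
    case pass
    obtain c' where c': "\<forall>k\<in>{1..K}. c' k \<in> CL m n H k" "a' * lprod (m*n) c K = lprod (m*n) c' K"
      "\<exists>!k. k \<in> {1..K} \<and> c' k \<noteq> c k"
      using Suc.IH[OF pass(1) _ cK pass(2)] Suc.prems(2) by auto
    have "a' \<in> carrier_mat (m*n) (m*n)"
      using elementary_gens_GG[OF _ pass(2)] Suc.prems(2) GG_carrier by simp
    then have "a * lprod (m*n) c (Suc K) = lprod (m*n) (c'(Suc K := c (Suc K))) (Suc K)"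
      using lprod_mult_pass carrier pass(3) c'(2) by blast
    moreover have "\<forall>k\<in>{1..Suc K}. (c'(Suc K := c (Suc K))) k \<in> CL m n H k"
      using c'(1) e by (auto simp: le_Suc_eq)
    ultimately show ?thesis using ex1_update_extend[OF c'(3)] by blast
  qed
qed simp

end

section \<open>Nearest neighbours are elementary generators\<close>

context wreath_product
begin

lemma Xk_last: "Xk m n H XH (2*n-1) = Xodd m n XH n"
proof -
  have "odd (2*n-1)" "(2*n-1+1) div 2 = n" using n_pos by auto
  then show ?thesis unfolding Xk_def by simp
qed

lemma adjswap_elementary_last:
  "i + 1 < n \<Longrightarrow> wr m n (\<lambda>_. 1\<^sub>m m) (adjswap i) \<in> elementary_gens (2*n-1)"
proof -
  assume "i + 1 < n"
  moreover have "2*n-1-1 = 2*(n-1)" by simp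
  ultimately have "i + 1 \<le> (2*n-1-1) div 2" by simp
  then show ?thesis by (rule adjswap_elementary)
qed

lemma Xodd_last_cases:
  assumes "x \<in> Xodd m n XH n"
  obtains (block) h where "h \<in> XH" "x = wr m n (single_block m 0 h) id"
    | (swap) i where "i + 1 < n" "x = wr m n (\<lambda>_. 1\<^sub>m m) (adjswap i)"
  using assms unfolding Xodd_def single_block_def by blast

lemma Xodd_last_elementary:
  assumes XH: "XH \<subseteq> H" and x: "x \<in> Xodd m n XH n" "x \<noteq> 1\<^sub>m (m*n)"
  shows "x \<in> elementary_gens (2*n-1)"
  using x(1)
proof (cases rule: Xodd_last_cases)
  case (block h)
  then have "h \<noteq> 1\<^sub>m m" using x(2) by (auto simp: wr_one)
  then show ?thesis using block XH single_block_elementary[of h 0] by auto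
next
  case (swap i)
  then show ?thesis using adjswap_elementary_last by simp
qed

lemma Xodd_last_inverse:
  assumes XH: "XH \<subseteq> H" and x: "x \<in> Xodd m n XH n"
  obtains y where "y \<in> elementary_gens (2*n-1) \<union> {1\<^sub>m (m*n)}" "y * x = 1\<^sub>m (m*n)"
proof -
  from x show ?thesis
  proof (cases rule: Xodd_last_cases)
    case (block h)
    have hH: "h \<in> H" using XH block(1) by blast
    obtain h' where h': "h' \<in> H" "h' * h = 1\<^sub>m m" using H_left_inverse[OF hH] by blast
    have "wr m n (single_block m 0 h') id * x = wr m n (single_block m 0 (h' * h)) id"
      unfolding block(2) by (rule single_block_mult_same[OF n_pos h'(1) hH])
    also have "\<dots> = 1\<^sub>m (m*n)" using h'(2) by (simp add: wr_one)
    finally have "wr m n (single_block m 0 h') id * x = 1\<^sub>m (m*n)" .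
    moreover have "wr m n (single_block m 0 h') id \<in> elementary_gens (2*n-1) \<union> {1\<^sub>m (m*n)}"
      using h'(1) single_block_elementary[of h' 0] by (cases "h' = 1\<^sub>m m") (auto simp: wr_one)
    ultimately show ?thesis using that by blast
  next
    case (swap i)
    have "adjswap i \<circ> adjswap i = id" by (simp add: fun_eq_iff)
    then have "x * x = 1\<^sub>m (m*n)"
      using wr_perm_mult[OF adjswap_permutes[OF swap(1)] adjswap_permutes[OF swap(1)]] swap(2)
      by (simp add: wr_one)
    moreover have "x \<in> elementary_gens (2*n-1) \<union> {1\<^sub>m (m*n)}" using swap adjswap_elementary_last by simp
    ultimately show ?thesis using that by blast
  qed
qed

lemma nearest_neighbor_elementary:
  assumes XH: "XH \<subseteq> H" and NNP: "NN_property (m*n) (GG m n H) x (Xk m n H XH (2*n-1))"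
    and e: "e \<in> NG (GG m n H) x" "e \<noteq> 1\<^sub>m (m*n)"
  shows "e \<in> elementary_gens (2*n-1)"
proof -
  have "e \<in> Xodd m n XH n \<union> inv_set (m*n) (GG m n H) (Xodd m n XH n)"
    using NNP e(1) unfolding NN_property_def Xk_last by blast
  then show ?thesis
  proof
    assume "e \<in> Xodd m n XH n"
    then show ?thesis using Xodd_last_elementary[OF XH _ e(2)] by blast
  next
    assume "e \<in> inv_set (m*n) (GG m n H) (Xodd m n XH n)"
    then obtain x where x: "x \<in> Xodd m n XH n" and eG: "e \<in> GG m n H" and ex: "e * x = 1\<^sub>m (m*n)"
      unfolding inv_set_def by blast
    obtain y where y: "y \<in> elementary_gens (2*n-1) \<union> {1\<^sub>m (m*n)}" "y * x = 1\<^sub>m (m*n)"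
      using Xodd_last_inverse[OF XH x] by blast
    have "x \<in> carrier_mat (m*n) (m*n)" using x by (cases rule: Xodd_last_cases) auto
    moreover have "y \<in> carrier_mat (m*n) (m*n)"
      using y(1) elementary_gens_GG[of "2*n-1" y] GG_carrier by auto
    ultimately have carrier: "e \<in> carrier_mat (m*n) (m*n)" "x \<in> carrier_mat (m*n) (m*n)"
      "y \<in> carrier_mat (m*n) (m*n)" using GG_carrier[OF eG] by auto
    have "x * y = 1\<^sub>m (m*n)" using mat_mult_left_right_inverse[OF carrier(3,2) y(2)] .
    then have "e = (e * x) * y" using carrier by (simp add: assoc_mult_mat)
    also have "\<dots> = y" using ex carrier(3) by simp
    finally have "e = y" .
    then show ?thesis using y(1) e(2) by blast
  qed
qed

end

theorem mainTheorem15: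
  fixes m n :: nat and H XH :: "complex mat set" and v0 :: "complex vec" and u :: "nat \<Rightarrow> real"
    and g gi h hi :: "complex mat" and r :: "complex vec" and d c :: "nat \<Rightarrow> complex mat"
  assumes H: "finite_unitary_group m H"
    and XH: "generates m XH H"
    and v0: "v0 \<in> carrier_vec m" "vnorm v0 = 1"
    and v0_min: "\<forall>h \<in> H - {1\<^sub>m m}. vnorm (1\<^sub>m m *\<^sub>v v0 - v0) < vnorm (h *\<^sub>v v0 - v0)"
    and u_pos: "0 < u 0"
    and u_inc: "\<forall>i. i + 1 < n \<longrightarrow> u i < u (i + 1)"
    and x0_norm: "vnorm (init_vec m n u v0) = 1"
    and NNP: "NN_property (m*n) (GG m n H) (init_vec m n u v0) (Xk m n H XH (2*n-1))"
    and g: "g \<in> GG m n H"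
    and c: "\<forall>k \<in> {1..2*n-1}. c k \<in> CL m n H k" "g = lprod (m*n) c (2*n-1)"
    and gi: "gi \<in> GG m n H" "gi * g = 1\<^sub>m (m*n)"
    and h: "h \<in> GG m n H"
    and hi: "hi \<in> GG m n H" "hi * h = 1\<^sub>m (m*n)"
    and h_nn: "nearest_neighbor (GG m n H) (init_vec m n u v0)
                  (gi *\<^sub>v init_vec m n u v0) (hi *\<^sub>v init_vec m n u v0)"
    and r: "r \<in> DR (m*n) (GG m n H) (init_vec m n u v0) h"
    and run: "decoding_run m n H (init_vec m n u v0) r d"
  shows "\<exists>!k. k \<in> {1..2*n-1} \<and> d k \<noteq> c k"
proof -
  have "0 < n" "0 < m" using x0_norm v0 unfolding vnorm_def init_vec_def by (auto intro!: gr0I)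
  then interpret wreath_code m n H v0 u
    using H v0 v0_min u_pos u_inc by unfold_locales auto
  have decoded: "lprod (m*n) d (2*n-1) = h" by (rule decoding_run_output[OF run r h])
  have "g * hi \<in> elementary_gens (2*n-1)"
    using nearest_neighbor_elementary[OF _ NNP] nearest_neighbor_quotient[OF g gi hi(1) h_nn] XH
    unfolding generates_def by blast
  moreover have "1 \<le> 2*n-1" using \<open>0 < n\<close> by simp
  ultimately obtain d' where d': "\<forall>k\<in>{1..2*n-1}. d' k \<in> CL m n H k"
      "(g * hi) * lprod (m*n) d (2*n-1) = lprod (m*n) d' (2*n-1)" "\<exists>!k. k \<in> {1..2*n-1} \<and> d' k \<noteq> d k"
    using elementary_gen_mult_lprod[OF _ order.refl decoding_run_CL[OF run]] by blast
  have "(g * hi) * h = g"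
    using GG_carrier[OF g] GG_carrier[OF hi(1)] GG_carrier[OF h] hi(2) by (simp add: assoc_mult_mat)
  then have "\<forall>k\<in>{1..2*n-1}. d' k = c k"
    using canonical_form_unique[OF order.refl d'(1) c(1)] d'(2) decoded c(2) by simp
  then have "k \<in> {1..2*n-1} \<and> d k \<noteq> c k \<longleftrightarrow> k \<in> {1..2*n-1} \<and> d' k \<noteq> d k" for k by auto
  then show ?thesis using d'(3) by simp
qed

end
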